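(* Let $(A,\Delta,\Delta')$ be a commutative Hopf brace over a field $k$, with antipodes $S$ (for $\Delta$) and $T$ (for $\Delta'$), and write $A_{\Delta'}$ for the Hopf algebra $(A,m,1,\Delta',\epsilon,T)$. Then: (1) $A$ is a left $A_{\Delta'}$-comodule algebra via $\rho(a)=a_{(-1)}\otimes a_{(0)}:=S(a_1)a_{21'}\otimes a_{22'}$; (2) $A$ is a right $A_{\Delta'}$-comodule algebra via $$\varphi(a)=a_{[0]}\otimes a_{[1]}:=T(a_{1'})_{(-1)}a_{2'}\otimes T(a_{1'})_{(0)}a_{3'}=S(T(a_{1'})_1)\,T(a_{1'})_{21'}\,a_{2'}\otimes T(a_{1'})_{22'}\,a_{3'};$$ (3) $(\mathrm{id}\otimes S)\rho(a)=\rho(S(a))$ for all $a\in A$, i.e. $a_{(-1)}\otimes S(a_{(0)})=S(a)_{(-1)}\otimes S(a)_{(0)}$.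
   Context: All objects are over a field $k$. A Hopf brace $(A,\Delta,\Delta')$ consists of an algebra $(A,m,1)$ with two Hopf algebra structures $(A,m,1,\Delta,\varepsilon,S)$ and $(A,m,1,\Delta',\epsilon,T)$ on the same algebra such that for all $h\in A$: $h_{1'}\otimes h_{2'1}\otimes h_{2'2}=h_{11'}S(h_2)h_{31'}\otimes h_{12'}\otimes h_{32'}$. It is commutative if the algebra $A$ is commutative. Sweedler notation: $\Delta(h)=h_1\otimes h_2$, $\Delta'(h)=h_{1'}\otimes h_{2'}$, iterated $\Delta'$ written $h_{1'}\otimes h_{2'}\otimes h_{3'}$; mixed indices like $h_{21'}$ mean $\Delta'$ applied to $h_2$. A left (resp. right) comodule algebra is a comodule whose coaction is an algebra map. *)

theory Defs
  imports Complex_Main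
begin

text \<open>The algebra A is a type 'a of class comm_ring_1 (commutativity of the
Hopf brace), which is a k-algebra via a scalar multiplication sc over a field 'k.
Elements of A (x) A and A (x) A (x) A are represented by finite lists of pairs / triples
(finite sums of pure tensors); two such representatives denote the same tensor iff every
k-valued bilinear (resp. trilinear) form takes the same value on them (for vector spaces over a
field these forms separate points of the tensor product).\<close>

definition k_algebra :: "('k::field \<Rightarrow> 'a::comm_ring_1 \<Rightarrow> 'a) \<Rightarrow> bool" where
  "k_algebra sc \<longleftrightarrow> Vector_Spaces.vector_space sc \<and> (\<forall>c x y. sc c (x * y) = sc c x * y)"

definition bilinear_form :: "('k::field \<Rightarrow> 'a::comm_ring_1 \<Rightarrow> 'a) \<Rightarrow> ('a \<Rightarrow> 'a \<Rightarrow> 'k) \<Rightarrow> bool" where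
  "bilinear_form sc \<beta> \<longleftrightarrow>
     (\<forall>x y z. \<beta> (x + y) z = \<beta> x z + \<beta> y z \<and> \<beta> z (x + y) = \<beta> z x + \<beta> z y) \<and>
     (\<forall>c x y. \<beta> (sc c x) y = c * \<beta> x y \<and> \<beta> x (sc c y) = c * \<beta> x y)"

definition trilinear_form :: "('k::field \<Rightarrow> 'a::comm_ring_1 \<Rightarrow> 'a) \<Rightarrow> ('a \<Rightarrow> 'a \<Rightarrow> 'a \<Rightarrow> 'k) \<Rightarrow> bool" where
  "trilinear_form sc \<gamma> \<longleftrightarrow>
     (\<forall>x y z w. \<gamma> (x + y) z w = \<gamma> x z w + \<gamma> y z w \<and>
                \<gamma> z (x + y) w = \<gamma> z x w + \<gamma> z y w \<and>
                \<gamma> z w (x + y) = \<gamma> z w x + \<gamma> z w y) \<and>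
     (\<forall>c x y z. \<gamma> (sc c x) y z = c * \<gamma> x y z \<and> \<gamma> x (sc c y) z = c * \<gamma> x y z \<and>
                \<gamma> x y (sc c z) = c * \<gamma> x y z)"

definition teq2 :: "('k::field \<Rightarrow> 'a::comm_ring_1 \<Rightarrow> 'a) \<Rightarrow> ('a \<times> 'a) list \<Rightarrow> ('a \<times> 'a) list \<Rightarrow> bool" where
  "teq2 sc t s \<longleftrightarrow> (\<forall>\<beta>. bilinear_form sc \<beta> \<longrightarrow>
      sum_list (map (\<lambda>(x, y). \<beta> x y) t) = sum_list (map (\<lambda>(x, y). \<beta> x y) s))"

definition teq3 :: "('k::field \<Rightarrow> 'a::comm_ring_1 \<Rightarrow> 'a) \<Rightarrow> ('a \<times> 'a \<times> 'a) list \<Rightarrow> ('a \<times> 'a \<times> 'a) list \<Rightarrow> bool" where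
  "teq3 sc t s \<longleftrightarrow> (\<forall>\<gamma>. trilinear_form sc \<gamma> \<longrightarrow>
      sum_list (map (\<lambda>(x, y, z). \<gamma> x y z) t) = sum_list (map (\<lambda>(x, y, z). \<gamma> x y z) s))"

definition tmul :: "('a::comm_ring_1 \<times> 'a) list \<Rightarrow> ('a \<times> 'a) list \<Rightarrow> ('a \<times> 'a) list" where
  "tmul t s = concat (map (\<lambda>(x, y). map (\<lambda>(u, v). (x * u, y * v)) s) t)"

definition lin_to_tensor :: "('k::field \<Rightarrow> 'a::comm_ring_1 \<Rightarrow> 'a) \<Rightarrow> ('a \<Rightarrow> ('a \<times> 'a) list) \<Rightarrow> bool" where
  "lin_to_tensor sc f \<longleftrightarrow>
     (\<forall>x y. teq2 sc (f (x + y)) (f x @ f y)) \<and>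
     (\<forall>c x. teq2 sc (f (sc c x)) (map (\<lambda>(u, v). (sc c u, v)) (f x)))"

definition lin_endo :: "('k::field \<Rightarrow> 'a::comm_ring_1 \<Rightarrow> 'a) \<Rightarrow> ('a \<Rightarrow> 'a) \<Rightarrow> bool" where
  "lin_endo sc f \<longleftrightarrow> (\<forall>x y. f (x + y) = f x + f y) \<and> (\<forall>c x. f (sc c x) = sc c (f x))"

definition lin_functional :: "('k::field \<Rightarrow> 'a::comm_ring_1 \<Rightarrow> 'a) \<Rightarrow> ('a \<Rightarrow> 'k) \<Rightarrow> bool" where
  "lin_functional sc f \<longleftrightarrow> (\<forall>x y. f (x + y) = f x + f y) \<and> (\<forall>c x. f (sc c x) = c * f x)"

definition copL :: "('a \<Rightarrow> ('a \<times> 'a) list) \<Rightarrow> 'a \<Rightarrow> ('a \<times> 'a \<times> 'a) list" where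
  "copL D h = concat (map (\<lambda>(x, y). map (\<lambda>(u, v). (u, v, y)) (D x)) (D h))"

definition copR :: "('a \<Rightarrow> ('a \<times> 'a) list) \<Rightarrow> 'a \<Rightarrow> ('a \<times> 'a \<times> 'a) list" where
  "copR D h = concat (map (\<lambda>(x, y). map (\<lambda>(u, v). (x, u, v)) (D y)) (D h))"

definition hopf_algebra ::
  "('k::field \<Rightarrow> 'a::comm_ring_1 \<Rightarrow> 'a) \<Rightarrow> ('a \<Rightarrow> ('a \<times> 'a) list) \<Rightarrow> ('a \<Rightarrow> 'k) \<Rightarrow> ('a \<Rightarrow> 'a) \<Rightarrow> bool" where
  "hopf_algebra sc D e S \<longleftrightarrow>
     k_algebra sc \<and> lin_to_tensor sc D \<and> lin_functional sc e \<and> lin_endo sc S \<and>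
     (\<forall>h. teq3 sc (copL D h) (copR D h)) \<and>
     (\<forall>h. sum_list (map (\<lambda>(x, y). sc (e x) y) (D h)) = h) \<and>
     (\<forall>h. sum_list (map (\<lambda>(x, y). sc (e y) x) (D h)) = h) \<and>
     (\<forall>a b. teq2 sc (D (a * b)) (tmul (D a) (D b))) \<and> teq2 sc (D 1) [(1, 1)] \<and>
     (\<forall>a b. e (a * b) = e a * e b) \<and> e 1 = 1 \<and>
     (\<forall>h. sum_list (map (\<lambda>(x, y). S x * y) (D h)) = sc (e h) 1) \<and>
     (\<forall>h. sum_list (map (\<lambda>(x, y). x * S y) (D h)) = sc (e h) 1)"

text \<open>Hopf brace (A, D, D') with antipodes S, T and counits e, e'; the compatibility
  h_1' (x) h_2'1 (x) h_2'2 = h_11' S(h_2) h_31' (x) h_12' (x) h_32'.\<close>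
definition hopf_brace ::
  "('k::field \<Rightarrow> 'a::comm_ring_1 \<Rightarrow> 'a) \<Rightarrow> ('a \<Rightarrow> ('a \<times> 'a) list) \<Rightarrow> ('a \<Rightarrow> 'k) \<Rightarrow> ('a \<Rightarrow> 'a)
     \<Rightarrow> ('a \<Rightarrow> ('a \<times> 'a) list) \<Rightarrow> ('a \<Rightarrow> 'k) \<Rightarrow> ('a \<Rightarrow> 'a) \<Rightarrow> bool" where
  "hopf_brace sc D e S D' e' T \<longleftrightarrow>
     hopf_algebra sc D e S \<and> hopf_algebra sc D' e' T \<and>
     (\<forall>h. teq3 sc
        (concat (map (\<lambda>(x, y). map (\<lambda>(u, v). (x, u, v)) (D y)) (D' h)))
        (concat (map (\<lambda>(h1, h2, h3).
            concat (map (\<lambda>(p, q). map (\<lambda>(r, s). (p * S h2 * r, q, s)) (D' h3)) (D' h1)))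
          (copR D h))))"

definition left_comodule_algebra ::
  "('k::field \<Rightarrow> 'a::comm_ring_1 \<Rightarrow> 'a) \<Rightarrow> ('a \<Rightarrow> ('a \<times> 'a) list) \<Rightarrow> ('a \<Rightarrow> 'k)
     \<Rightarrow> ('a \<Rightarrow> ('a \<times> 'a) list) \<Rightarrow> bool" where
  "left_comodule_algebra sc D' e' \<rho> \<longleftrightarrow>
     lin_to_tensor sc \<rho> \<and>
     (\<forall>a. teq3 sc (concat (map (\<lambda>(w, v). map (\<lambda>(x, y). (x, y, v)) (D' w)) (\<rho> a)))
                  (concat (map (\<lambda>(w, v). map (\<lambda>(x, y). (w, x, y)) (\<rho> v)) (\<rho> a)))) \<and>
     (\<forall>a. sum_list (map (\<lambda>(w, v). sc (e' w) v) (\<rho> a)) = a) \<and>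
     (\<forall>a b. teq2 sc (\<rho> (a * b)) (tmul (\<rho> a) (\<rho> b))) \<and> teq2 sc (\<rho> 1) [(1, 1)]"

definition right_comodule_algebra ::
  "('k::field \<Rightarrow> 'a::comm_ring_1 \<Rightarrow> 'a) \<Rightarrow> ('a \<Rightarrow> ('a \<times> 'a) list) \<Rightarrow> ('a \<Rightarrow> 'k)
     \<Rightarrow> ('a \<Rightarrow> ('a \<times> 'a) list) \<Rightarrow> bool" where
  "right_comodule_algebra sc D' e' \<phi> \<longleftrightarrow>
     lin_to_tensor sc \<phi> \<and>
     (\<forall>a. teq3 sc (concat (map (\<lambda>(v, w). map (\<lambda>(x, y). (x, y, w)) (\<phi> v)) (\<phi> a)))
                  (concat (map (\<lambda>(v, w). map (\<lambda>(x, y). (v, x, y)) (D' w)) (\<phi> a)))) \<and>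
     (\<forall>a. sum_list (map (\<lambda>(v, w). sc (e' w) v) (\<phi> a)) = a) \<and>
     (\<forall>a b. teq2 sc (\<phi> (a * b)) (tmul (\<phi> a) (\<phi> b))) \<and> teq2 sc (\<phi> 1) [(1, 1)]"

definition brace_rho :: "('a::comm_ring_1 \<Rightarrow> ('a \<times> 'a) list) \<Rightarrow> ('a \<Rightarrow> 'a) \<Rightarrow> ('a \<Rightarrow> ('a \<times> 'a) list)
     \<Rightarrow> 'a \<Rightarrow> ('a \<times> 'a) list" where
  "brace_rho D S D' a = concat (map (\<lambda>(x, y). map (\<lambda>(u, v). (S x * u, v)) (D' y)) (D a))"

definition brace_phi :: "('a::comm_ring_1 \<Rightarrow> ('a \<times> 'a) list) \<Rightarrow> ('a \<Rightarrow> 'a) \<Rightarrow> ('a \<Rightarrow> ('a \<times> 'a) list)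
     \<Rightarrow> ('a \<Rightarrow> 'a) \<Rightarrow> 'a \<Rightarrow> ('a \<times> 'a) list" where
  "brace_phi D S D' T a = concat (map (\<lambda>(x, y, z).
       concat (map (\<lambda>(y1, y2). map (\<lambda>(u, v). (S y1 * u * y, v * z)) (D' y2)) (D (T x))))
     (copR D' a))"

end

theory Submission
  imports Defs
begin

text \<open>Tensor identities are checked by pairing both sides with arbitrary multilinear forms, which turns
  every computation into a chain of equalities between iterated finite sums indexed as in Sweedler
  notation. Two consequences of the brace compatibility drive the argument: the two counits agree, and
  \<Delta>' factors through \<rho> as h_1' \<otimes> h_2' = h_1 h_2(-1) \<otimes> h_2(0).
  Together with multiplicativity of the antipodes (the algebra is commutative) this makes \<rho> an algebra map.
  Coassociativity of \<rho> is not computed directly: after multiplying the first two legs by \<Delta>'(h_1), both sides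
  become the two sides of coassociativity of \<Delta>', and this factor can be cancelled because
  \<Delta>'(S a_1) \<Delta>'(a_2) \<otimes> a_3 = 1 \<otimes> 1 \<otimes> a. Coassociativity of \<phi> follows the same pattern, with the factor
  (id \<otimes> \<Delta>')\<rho>(h_1'), cancelled using T, and the factorisation \<Delta>'(a) = \<rho>(a_1') \<phi>(a_2').
  Finally, (id \<otimes> S)\<rho> and \<rho> S are both convolution inverses of \<rho>, hence equal.\<close>

definition sum_pairs :: "('a \<times> 'a) list \<Rightarrow> ('a \<Rightarrow> 'a \<Rightarrow> 'k::comm_ring_1) \<Rightarrow> 'k" where
  "sum_pairs t F = sum_list (map (\<lambda>(x, y). F x y) t)"

definition sum_triples :: "('a \<times> 'a \<times> 'a) list \<Rightarrow> ('a \<Rightarrow> 'a \<Rightarrow> 'a \<Rightarrow> 'k::comm_ring_1) \<Rightarrow> 'k" where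
  "sum_triples t F = sum_list (map (\<lambda>(x, y, z). F x y z) t)"

lemma sum_pairs_simps [simp]:
  "sum_pairs [] F = 0"
  "sum_pairs (p # t) F = F (fst p) (snd p) + sum_pairs t F"
  "sum_pairs (t @ s) F = sum_pairs t F + sum_pairs s F"
  by (auto simp: sum_pairs_def split: prod.splits)

lemma sum_triples_simps [simp]:
  "sum_triples [] F = 0"
  "sum_triples (p # t) F = F (fst p) (fst (snd p)) (snd (snd p)) + sum_triples t F"
  "sum_triples (t @ s) F = sum_triples t F + sum_triples s F"
  by (auto simp: sum_triples_def split: prod.splits)

lemma sum_pairs_concat [simp]:
  "sum_pairs (concat (map (\<lambda>(x, y). G x y) t)) F = sum_pairs t (\<lambda>x y. sum_pairs (G x y) F)"
  by (induction t) auto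

lemma sum_pairs_map [simp]:
  "sum_pairs (map (\<lambda>(u, v). (f u v, g u v)) t) F = sum_pairs t (\<lambda>u v. F (f u v) (g u v))"
  by (induction t) auto

lemma sum_triples_concat [simp]:
  "sum_triples (concat (map (\<lambda>(x, y). G x y) t)) F = sum_pairs t (\<lambda>x y. sum_triples (G x y) F)"
  by (induction t) auto

lemma sum_triples_map [simp]:
  "sum_triples (map (\<lambda>(u, v). (f u v, g u v, h u v)) t) F
      = sum_pairs t (\<lambda>u v. F (f u v) (g u v) (h u v))"
  by (induction t) auto

lemma sum_triples_map_Pair [simp]: "sum_triples (map (Pair x) t) F = sum_pairs t (F x)"
  by (induction t) auto

lemma sum_triples_concat_triples [simp]:
  "sum_triples (concat (map (\<lambda>(x, y, z). G x y z) t)) F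
      = sum_triples t (\<lambda>x y z. sum_triples (G x y z) F)"
  by (induction t) auto

lemma sum_pairs_concat_triples [simp]:
  "sum_pairs (concat (map (\<lambda>(x, y, z). G x y z) t)) F = sum_triples t (\<lambda>x y z. sum_pairs (G x y z) F)"
  by (induction t) auto

lemma sum_pairs_zero [simp]: "sum_pairs t (\<lambda>x y. 0) = 0"
  by (induction t) auto

lemma sum_pairs_add: "sum_pairs t (\<lambda>x y. F x y + G x y) = sum_pairs t F + sum_pairs t G"
  by (induction t) auto

lemma sum_pairs_mult_left: "sum_pairs t (\<lambda>x y. c * F x y) = c * sum_pairs t F"
  by (induction t) (auto simp: algebra_simps)

lemma sum_pairs_mult_right: "sum_pairs t (\<lambda>x y. F x y * c) = sum_pairs t F * c"
  by (induction t) (auto simp: algebra_simps)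

lemma sum_pairs_product:
  "sum_pairs t F * sum_pairs s G = sum_pairs t (\<lambda>x y. sum_pairs s (\<lambda>u v. F x y * G u v))"
  by (simp only: sum_pairs_mult_right[symmetric]) (simp only: sum_pairs_mult_left[symmetric])

lemma sum_pairs_swap:
  "sum_pairs t (\<lambda>x y. sum_pairs s (F x y)) = sum_pairs s (\<lambda>u v. sum_pairs t
      (\<lambda>x y. F x y u v))"
  by (induction t) (auto simp: sum_pairs_add)

named_theorems linear_intros

locale comm_k_algebra =
  fixes sc :: "'k::field \<Rightarrow> 'a::comm_ring_1 \<Rightarrow> 'a"
  assumes is_k_algebra: "k_algebra sc"
begin

sublocale vs: vector_space sc
  using is_k_algebra by (simp add: k_algebra_def)

abbreviation linear_form :: "('a \<Rightarrow> 'k) \<Rightarrow> bool" where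
  "linear_form \<equiv> lin_functional sc"

abbreviation linear_endo :: "('a \<Rightarrow> 'a) \<Rightarrow> bool" where
  "linear_endo \<equiv> lin_endo sc"

definition bilinear :: "('a \<Rightarrow> 'a \<Rightarrow> 'k) \<Rightarrow> bool" where
  "bilinear F \<longleftrightarrow> (\<forall>x. linear_form (F x)) \<and> (\<forall>y. linear_form (\<lambda>x. F x y))"

definition trilinear :: "('a \<Rightarrow> 'a \<Rightarrow> 'a \<Rightarrow> 'k) \<Rightarrow> bool" where
  "trilinear F \<longleftrightarrow>
     (\<forall>x y. linear_form (F x y)) \<and> (\<forall>x z. linear_form
         (\<lambda>y. F x y z)) \<and> (\<forall>y z. linear_form (\<lambda>x. F x y z))"

definition quadrilinear :: "('a \<Rightarrow> 'a \<Rightarrow> 'a \<Rightarrow> 'a \<Rightarrow> 'k) \<Rightarrow> bool" where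
  "quadrilinear F \<longleftrightarrow> (\<forall>b c d. linear_form
      (\<lambda>a. F a b c d)) \<and> (\<forall>a c d. linear_form (\<lambda>b. F a b c d)) \<and>
     (\<forall>a b d. linear_form (\<lambda>c. F a b c d)) \<and> (\<forall>a b c. linear_form
         (\<lambda>d. F a b c d))"

lemma linear_formI:
  "(\<And>x y. f (x + y) = f x + f y) \<Longrightarrow> (\<And>c x. f (sc c x)
      = c * f x) \<Longrightarrow> linear_form f"
  by (simp add: lin_functional_def)

lemma linear_form_add: "linear_form f \<Longrightarrow> f (x + y) = f x + f y"
  by (simp add: lin_functional_def)

lemma linear_form_scale: "linear_form f \<Longrightarrow> f (sc c x) = c * f x"
  by (simp add: lin_functional_def)

lemma linear_form_weighted_sum:
  "linear_form f \<Longrightarrow> f (sum_list (map (\<lambda>(x, y). sc (c x y) (g x y)) t))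
      = sum_pairs t (\<lambda>x y. c x y * f (g x y))"
  using linear_form_scale[of f 0 0] by (induction t) (auto simp: linear_form_add linear_form_scale)

lemma linear_form_sum_pairs_eq:
  "linear_form f \<Longrightarrow> f (sum_list (map (\<lambda>(x, y). g x y) t))
      = sum_pairs t (\<lambda>x y. f (g x y))"
  using linear_form_scale[of f 0 0] by (induction t) (auto simp: linear_form_add)

lemma eq_if_linear_forms_eq:
  assumes "\<And>f. linear_form f \<Longrightarrow> f a = f b"
  shows "a = b"
proof (rule ccontr)
  assume "a \<noteq> b"
  then have "vs.independent {a - b}" by simp
  interpret forms: vector_space_pair sc "(*) :: 'k \<Rightarrow> 'k \<Rightarrow> 'k"
    by unfold_locales (auto simp: algebra_simps)
  from forms.linear_independent_extend[OF \<open>vs.independent {a - b}\<close>, of "\<lambda>_. 1"]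
  obtain g where g: "Vector_Spaces.linear sc (*) g" "g (a - b) = 1" by auto
  have g_linear: "linear_form g"
    using g(1) by (simp add: lin_functional_def Vector_Spaces.linear_iff)
  then have "g (a - b) = 0"
    using assms[OF g_linear] linear_form_add[OF g_linear, of "a - b" b] by simp
  with g(2) show False by simp
qed

lemma bilinear_form_iff: "bilinear_form sc \<beta> \<longleftrightarrow> bilinear \<beta>"
  unfolding bilinear_form_def bilinear_def lin_functional_def by auto

lemma trilinear_form_iff: "trilinear_form sc \<gamma> \<longleftrightarrow> trilinear \<gamma>"
  unfolding trilinear_form_def trilinear_def lin_functional_def by auto

lemma teq2_iff: "teq2 sc t s \<longleftrightarrow> (\<forall>\<beta>. bilinear \<beta> \<longrightarrow>
    sum_pairs t \<beta> = sum_pairs s \<beta>)"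
  by (simp add: teq2_def bilinear_form_iff sum_pairs_def)

lemma teq3_iff: "teq3 sc t s \<longleftrightarrow> (\<forall>\<gamma>. trilinear \<gamma> \<longrightarrow> sum_triples t \<gamma> = sum_triples s \<gamma>)"
  by (simp add: teq3_def trilinear_form_iff sum_triples_def)

lemma bilinearI [linear_intros]:
  "(\<And>y. linear_form (\<lambda>x. F x y)) \<Longrightarrow> (\<And>x. linear_form
      (\<lambda>y. F x y)) \<Longrightarrow> bilinear F"
  by (simp add: bilinear_def)

lemma trilinearI [linear_intros]:
  "(\<And>y z. linear_form (\<lambda>x. F x y z)) \<Longrightarrow> (\<And>x z. linear_form
      (\<lambda>y. F x y z)) \<Longrightarrow>
    (\<And>x y. linear_form (\<lambda>z. F x y z)) \<Longrightarrow> trilinear F"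
  by (simp add: trilinear_def)

lemma quadrilinearI:
  "(\<And>b c d. linear_form (\<lambda>a. F a b c d)) \<Longrightarrow> (\<And>a c d. linear_form
      (\<lambda>b. F a b c d)) \<Longrightarrow>
    (\<And>a b d. linear_form (\<lambda>c. F a b c d)) \<Longrightarrow> (\<And>a b c. linear_form
        (\<lambda>d. F a b c d)) \<Longrightarrow> quadrilinear F"
  by (simp add: quadrilinear_def)

lemma linear_form_compose_add [linear_intros]:
  "linear_form f \<Longrightarrow> linear_form g \<Longrightarrow> linear_form (\<lambda>x. f x + g x)"
  by (rule linear_formI) (auto simp: linear_form_add linear_form_scale algebra_simps)

lemma linear_form_compose_mult_left [linear_intros]:
  "linear_form f \<Longrightarrow> linear_form (\<lambda>x. c * f x)"
  by (rule linear_formI) (auto simp: linear_form_add linear_form_scale algebra_simps)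

lemma linear_form_compose_mult_right [linear_intros]:
  "linear_form f \<Longrightarrow> linear_form (\<lambda>x. f x * c)"
  by (rule linear_formI) (auto simp: linear_form_add linear_form_scale algebra_simps)

lemma linear_form_sum_pairs [linear_intros]:
  "(\<And>u v. linear_form (\<lambda>x. F x u v)) \<Longrightarrow> linear_form (\<lambda>x. sum_pairs t (F x))"
proof (induction t)
  case Nil
  then show ?case by (auto intro!: linear_formI)
next
  case (Cons p t)
  then show ?case
    by (auto intro!: linear_form_compose_add simp del: sum_pairs_simps simp: sum_pairs_simps(2)[abs_def])
qed

lemma linear_form_compose:
  "linear_form f \<Longrightarrow> linear_endo g \<Longrightarrow> linear_form (\<lambda>x. f (g x))"
  by (rule linear_formI) (auto simp: lin_endo_def linear_form_add linear_form_scale)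

lemma bilinear_compose1:
  "bilinear F \<Longrightarrow> linear_endo g \<Longrightarrow> linear_form (\<lambda>x. F (g x) y)"
  unfolding bilinear_def using linear_form_compose[of "\<lambda>x. F x y" g] by auto

lemma bilinear_compose2:
  "bilinear F \<Longrightarrow> linear_endo g \<Longrightarrow> linear_form (\<lambda>x. F y (g x))"
  unfolding bilinear_def using linear_form_compose[of "\<lambda>x. F y x" g] by auto

lemmas bilinear_compose = bilinear_compose1 bilinear_compose2

lemma trilinear_compose1:
  "trilinear F \<Longrightarrow> linear_endo g \<Longrightarrow> linear_form (\<lambda>x. F (g x) y z)"
  unfolding trilinear_def using linear_form_compose[of "\<lambda>x. F x y z" g] by auto

lemma trilinear_compose2:
  "trilinear F \<Longrightarrow> linear_endo g \<Longrightarrow> linear_form (\<lambda>x. F y (g x) z)"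
  unfolding trilinear_def using linear_form_compose[of "\<lambda>x. F y x z" g] by auto

lemma trilinear_compose3:
  "trilinear F \<Longrightarrow> linear_endo g \<Longrightarrow> linear_form (\<lambda>x. F y z (g x))"
  unfolding trilinear_def using linear_form_compose[of "\<lambda>x. F y z x" g] by auto

lemmas trilinear_compose = trilinear_compose1 trilinear_compose2 trilinear_compose3

lemma quadrilinear_compose1:
  "quadrilinear F \<Longrightarrow> linear_endo g \<Longrightarrow> linear_form (\<lambda>x. F (g x) b c d)"
  unfolding quadrilinear_def using linear_form_compose[of "\<lambda>x. F x b c d" g] by auto

lemma quadrilinear_compose2:
  "quadrilinear F \<Longrightarrow> linear_endo g \<Longrightarrow> linear_form (\<lambda>x. F a (g x) c d)"
  unfolding quadrilinear_def using linear_form_compose[of "\<lambda>x. F a x c d" g] by auto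

lemma quadrilinear_compose3:
  "quadrilinear F \<Longrightarrow> linear_endo g \<Longrightarrow> linear_form (\<lambda>x. F a b (g x) d)"
  unfolding quadrilinear_def using linear_form_compose[of "\<lambda>x. F a b x d" g] by auto

lemma quadrilinear_compose4:
  "quadrilinear F \<Longrightarrow> linear_endo g \<Longrightarrow> linear_form (\<lambda>x. F a b c (g x))"
  unfolding quadrilinear_def using linear_form_compose[of "\<lambda>x. F a b c x" g] by auto

lemmas quadrilinear_compose = quadrilinear_compose1 quadrilinear_compose2 quadrilinear_compose3 quadrilinear_compose4

lemma linear_endo_id [linear_intros]: "linear_endo (\<lambda>x. x)"
  by (simp add: lin_endo_def)

lemma linear_endo_mult_right [linear_intros]:
  "linear_endo g \<Longrightarrow> linear_endo (\<lambda>x. g x * c)"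
  using is_k_algebra by (auto simp: lin_endo_def k_algebra_def distrib_right)

lemma linear_endo_mult_left [linear_intros]:
  "linear_endo g \<Longrightarrow> linear_endo (\<lambda>x. c * g x)"
  using linear_endo_mult_right[of g c] by (simp add: mult.commute)

lemma linear_endo_compose:
  "linear_endo f \<Longrightarrow> linear_endo g \<Longrightarrow> linear_endo (\<lambda>x. f (g x))"
  by (simp add: lin_endo_def)

lemma linear_form_tensor:
  assumes f: "lin_to_tensor sc f" and F: "bilinear F" and g: "linear_endo g"
  shows "linear_form (\<lambda>x. sum_pairs (f (g x)) F)"
proof (rule linear_formI)
  fix x y
  show "sum_pairs (f (g (x + y))) F = sum_pairs (f (g x)) F + sum_pairs (f (g y)) F"
    using f F g by (simp add: lin_endo_def lin_to_tensor_def teq2_iff)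
next
  fix c x
  have "\<And>u v. F (sc c u) v = c * F u v"
    using F unfolding bilinear_def by (metis linear_form_scale)
  moreover have "sum_pairs (f (g (sc c x))) F = sum_pairs (map (\<lambda>(u, v). (sc c u, v)) (f (g x))) F"
    using f F g by (simp add: lin_endo_def lin_to_tensor_def teq2_iff del: sum_pairs_map)
  ultimately show "sum_pairs (f (g (sc c x))) F = c * sum_pairs (f (g x)) F"
    by (simp add: sum_pairs_mult_left)
qed

lemma lin_to_tensorI:
  assumes "\<And>F. bilinear F \<Longrightarrow> linear_form (\<lambda>x. sum_pairs (f x) F)"
  shows "lin_to_tensor sc f"
  unfolding lin_to_tensor_def teq2_iff
proof (intro allI impI conjI)
  fix x y and \<beta> :: "'a \<Rightarrow> 'a \<Rightarrow> 'k"
  assume "bilinear \<beta>"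
  then show "sum_pairs (f (x + y)) \<beta> = sum_pairs (f x @ f y) \<beta>"
    using assms linear_form_add[of "\<lambda>x. sum_pairs (f x) \<beta>"] by simp
next
  fix c x and \<beta> :: "'a \<Rightarrow> 'a \<Rightarrow> 'k"
  assume \<beta>: "bilinear \<beta>"
  then have "\<And>u v. \<beta> (sc c u) v = c * \<beta> u v"
    unfolding bilinear_def by (metis linear_form_scale)
  then show "sum_pairs (f (sc c x)) \<beta> = sum_pairs (map (\<lambda>(u, v). (sc c u, v)) (f x)) \<beta>"
    using linear_form_scale[OF assms[OF \<beta>]] by (simp add: sum_pairs_mult_left)
qed

end

locale comm_hopf_algebra = comm_k_algebra sc for sc :: "'k::field \<Rightarrow> 'a::comm_ring_1 \<Rightarrow> 'a" +
  fixes D :: "'a \<Rightarrow> ('a \<times> 'a) list" and e :: "'a \<Rightarrow> 'k" and S :: "'a \<Rightarrow> 'a"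
  assumes hopf: "hopf_algebra sc D e S"
begin

lemma coproduct_linear: "lin_to_tensor sc D"
  using hopf by (simp add: hopf_algebra_def)

lemma counit_linear [linear_intros]: "linear_form e"
  using hopf by (simp add: hopf_algebra_def)

lemma antipode_linear [linear_intros]: "linear_endo S"
  using hopf by (simp add: hopf_algebra_def)

lemma counit_mult: "e (a * b) = e a * e b"
  using hopf by (simp add: hopf_algebra_def)

lemma counit_one: "e 1 = 1"
  using hopf by (simp add: hopf_algebra_def)

lemma linear_form_counit_compose [linear_intros]:
  "linear_endo g \<Longrightarrow> linear_form (\<lambda>x. e (g x))"
  by (rule linear_form_compose[OF counit_linear])

lemma linear_endo_antipode_compose [linear_intros]:
  "linear_endo g \<Longrightarrow> linear_endo (\<lambda>x. S (g x))"
  by (rule linear_endo_compose[OF antipode_linear])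

lemma linear_form_coproduct_compose [linear_intros]:
  "bilinear F \<Longrightarrow> linear_endo g \<Longrightarrow> linear_form (\<lambda>x. sum_pairs (D (g x)) F)"
  by (rule linear_form_tensor[OF coproduct_linear])


lemma coassoc:
  "trilinear G \<Longrightarrow>
    sum_pairs (D h) (\<lambda>x y. sum_pairs (D x) (\<lambda>u v. G u v y))
        = sum_pairs (D h) (\<lambda>x y. sum_pairs (D y) (\<lambda>u v. G x u v))"
  using hopf unfolding hopf_algebra_def teq3_iff by (simp add: copL_def copR_def)

lemma counit_left:
  "linear_form f \<Longrightarrow> sum_pairs (D h) (\<lambda>x y. e x * f y) = f h"
  using hopf linear_form_weighted_sum[of f "\<lambda>x y. e x" "\<lambda>x y. y" "D h"] by (simp add: hopf_algebra_def)

lemma counit_right: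
  "linear_form f \<Longrightarrow> sum_pairs (D h) (\<lambda>x y. f x * e y) = f h"
  using hopf linear_form_weighted_sum[of f "\<lambda>x y. e y" "\<lambda>x y. x" "D h"]
  by (simp add: hopf_algebra_def mult.commute)

lemma antipode_left:
  "linear_form f \<Longrightarrow> sum_pairs (D h) (\<lambda>x y. f (S x * y)) = e h * f 1"
  using hopf linear_form_sum_pairs_eq[of f "\<lambda>x y. S x * y" "D h"]
  by (simp add: hopf_algebra_def linear_form_scale)

lemma antipode_right:
  "linear_form f \<Longrightarrow> sum_pairs (D h) (\<lambda>x y. f (x * S y)) = e h * f 1"
  using hopf linear_form_sum_pairs_eq[of f "\<lambda>x y. x * S y" "D h"]
  by (simp add: hopf_algebra_def linear_form_scale)

lemma coproduct_mult:
  "bilinear F \<Longrightarrow> sum_pairs (D (a * b)) F = sum_pairs (D a) (\<lambda>x y. sum_pairs (D b)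
      (\<lambda>u v. F (x * u) (y * v)))"
  using hopf unfolding hopf_algebra_def teq2_iff by (simp add: tmul_def)

lemma coproduct_one: "bilinear F \<Longrightarrow> sum_pairs (D 1) F = F 1 1"
  using hopf unfolding hopf_algebra_def teq2_iff by simp

lemma counit_antipode: "e (S h) = e h"
proof -
  have "e h = sum_pairs (D h) (\<lambda>x y. e (S x * y))"
    by (subst antipode_left) (intro linear_intros, simp add: counit_one)
  also have "\<dots> = sum_pairs (D h) (\<lambda>x y. e (S x) * e y)"
    by (simp add: counit_mult)
  also have "\<dots> = e (S h)"
    by (rule counit_right) (intro linear_intros)
  finally show ?thesis by simp
qed

lemma antipode_one: "S 1 = 1"
proof (rule eq_if_linear_forms_eq)
  fix f assume f: "linear_form f"
  have "f (S 1) = sum_pairs (D 1) (\<lambda>x y. f (S x * y))"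
    by (subst coproduct_one) (intro linear_intros linear_form_compose[OF f], simp)
  also have "\<dots> = f 1"
    by (subst antipode_left) (intro linear_intros f, simp add: counit_one)
  finally show "f (S 1) = f 1" .
qed

text \<open>Both S(ab) and S(a)S(b) are convolution inverses of the multiplication; the next two
  lemmas evaluate one convolution sum in the two possible ways.\<close>

lemma antipode_mult_convolution_left:
  assumes f: "linear_form f"
  shows "sum_pairs (D a) (\<lambda>x q. sum_pairs (D b) (\<lambda>z s. sum_pairs (D x)
      (\<lambda>a1 p. sum_pairs (D z) (\<lambda>b1 r.
           f (S (a1 * b1) * (p * r) * (S q * S s)))))) = f (S a * S b)"
proof -
  note R = linear_intros linear_form_compose[OF f]
  have "\<And>x z q s. sum_pairs (D x) (\<lambda>a1 p. sum_pairs (D z)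
      (\<lambda>b1 r. f (S (a1 * b1) * (p * r) * (S q * S s))))
      = sum_pairs (D (x * z)) (\<lambda>u v. f (S u * v * (S q * S s)))"
    by (rule coproduct_mult[symmetric]) (intro R)
  moreover have "\<And>x z q s. sum_pairs (D (x * z)) (\<lambda>u v. f (S u * v * (S q * S s)))
      = e x * (e z * f (S q * S s))"
    by (subst antipode_left[where f = "\<lambda>w. f (w * (S _ * S _))"]) (intro R, simp add: counit_mult)
  moreover have "\<And>q. sum_pairs (D b) (\<lambda>z s. e z * f (S q * S s)) = f (S q * S b)"
    by (rule counit_left) (intro R)
  moreover have "sum_pairs (D a) (\<lambda>x q. e x * f (S q * S b)) = f (S a * S b)"
    by (rule counit_left) (intro R)
  ultimately show ?thesis
    by (simp add: sum_pairs_mult_left)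
qed

lemma antipode_mult_convolution_right:
  assumes f: "linear_form f"
  shows "sum_pairs (D a) (\<lambda>x q. sum_pairs (D b) (\<lambda>z s. sum_pairs (D x)
      (\<lambda>a1 p. sum_pairs (D z) (\<lambda>b1 r.
           f (S (a1 * b1) * (p * r) * (S q * S s)))))) = f (S (a * b))"
    (is "?lhs = _")
proof -
  note R = linear_intros linear_form_compose[OF f]
  have "\<And>x q. sum_pairs (D b) (\<lambda>z s. sum_pairs (D x) (\<lambda>a1 p. sum_pairs (D z) (\<lambda>b1 r.
           f (S (a1 * b1) * (p * r) * (S q * S s)))))
      = sum_pairs (D x) (\<lambda>a1 p. sum_pairs (D b) (\<lambda>z s. sum_pairs (D z) (\<lambda>b1 r.
           f (S (a1 * b1) * (p * S q) * (r * S s)))))"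
    by (subst sum_pairs_swap) (simp add: ac_simps)
  then have "?lhs = sum_pairs (D a) (\<lambda>x q. sum_pairs (D x) (\<lambda>a1 p. sum_pairs (D b)
      (\<lambda>z s. sum_pairs (D z) (\<lambda>b1 r.
           f (S (a1 * b1) * (p * S q) * (r * S s))))))"
    by simp
  also have "\<dots> = sum_pairs (D a) (\<lambda>x q. sum_pairs (D x) (\<lambda>a1 p. sum_pairs (D b)
      (\<lambda>b1 w. sum_pairs (D w) (\<lambda>r s.
           f (S (a1 * b1) * (p * S q) * (r * S s))))))"
    by (subst coassoc) (intro R, rule refl)
  also have "\<dots> = sum_pairs (D a) (\<lambda>a1 y. sum_pairs (D y) (\<lambda>p q. sum_pairs (D b)
      (\<lambda>b1 w. sum_pairs (D w) (\<lambda>r s.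
           f (S (a1 * b1) * (p * S q) * (r * S s))))))"
    by (rule coassoc) (intro R)
  also have "\<dots> = sum_pairs (D a) (\<lambda>a1 y. sum_pairs (D b) (\<lambda>b1 w. sum_pairs (D y)
      (\<lambda>p q. sum_pairs (D w) (\<lambda>r s.
           f (S (a1 * b1) * (p * S q) * (r * S s))))))"
    by (subst sum_pairs_swap) (rule refl)
  also have "\<dots> = sum_pairs (D a) (\<lambda>a1 y. sum_pairs (D b) (\<lambda>b1 w. f (S (a1 * b1)) * e w * e y))"
  proof -
    have "\<And>a1 b1 p q w. sum_pairs (D w) (\<lambda>r s. f (S (a1 * b1) * (p * S q) * (r * S s)))
        = e w * f (S (a1 * b1) * (p * S q))"
      by (subst antipode_right[where f = "\<lambda>z. f (S (_ * _) * (_ * S _) * z)"]) (intro R, simp)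
    moreover have "\<And>a1 b1 y. sum_pairs (D y) (\<lambda>p q. f (S (a1 * b1) * (p * S q))) = e y * f (S (a1 * b1))"
      by (subst antipode_right[where f = "\<lambda>z. f (S (_ * _) * z)"]) (intro R, simp)
    ultimately show ?thesis
      by (simp add: sum_pairs_mult_left sum_pairs_mult_right ac_simps)
  qed
  also have "\<dots> = f (S (a * b))"
  proof -
    have "\<And>a1. sum_pairs (D b) (\<lambda>b1 w. f (S (a1 * b1)) * e w) = f (S (a1 * b))"
      by (rule counit_right) (intro R)
    moreover have "sum_pairs (D a) (\<lambda>a1 y. f (S (a1 * b)) * e y) = f (S (a * b))"
      by (rule counit_right) (intro R)
    ultimately show ?thesis
      by (simp add: sum_pairs_mult_right)
  qed
  finally show ?thesis .
qed

lemma antipode_mult: "S (a * b) = S a * S b"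
  by (rule eq_if_linear_forms_eq)
    (metis antipode_mult_convolution_left antipode_mult_convolution_right)

end

locale comm_hopf_brace = comm_k_algebra sc for sc :: "'k::field \<Rightarrow> 'a::comm_ring_1 \<Rightarrow> 'a" +
  fixes D :: "'a \<Rightarrow> ('a \<times> 'a) list" and e :: "'a \<Rightarrow> 'k" and S :: "'a \<Rightarrow> 'a"
    and D' :: "'a \<Rightarrow> ('a \<times> 'a) list" and e' :: "'a \<Rightarrow> 'k" and T :: "'a \<Rightarrow> 'a"
  assumes brace: "hopf_brace sc D e S D' e' T"
begin

sublocale H: comm_hopf_algebra sc D e S
  using brace is_k_algebra by unfold_locales (simp add: hopf_brace_def)

sublocale H': comm_hopf_algebra sc D' e' T
  using brace is_k_algebra by unfold_locales (simp add: hopf_brace_def)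

lemma brace_compat:
  "trilinear G \<Longrightarrow> sum_pairs (D' h) (\<lambda>x y. sum_pairs (D y) (\<lambda>u v. G x u v)) =
  sum_pairs (D h) (\<lambda>h1 r. sum_pairs (D r) (\<lambda>h2 h3. sum_pairs (D' h1) (\<lambda>p q. sum_pairs (D' h3)
      (\<lambda>r' s. G (p * S h2 * r') q s))))"
  using brace unfolding hopf_brace_def teq3_iff by (simp add: copR_def)

lemma counit'_S_eq_counit: "e' (S h) = e h"
proof -
  have "e h = sum_pairs (D' h) (\<lambda>x y. e' x * e y)" by (rule H'.counit_left[symmetric]) (intro linear_intros)
  also have "\<dots> = sum_pairs (D' h) (\<lambda>x y. sum_pairs (D y) (\<lambda>u v. e' x * e u * e v))"
  proof -
    have "\<And>y. sum_pairs (D y) (\<lambda>u v. e u * e v) = e y" by (rule H.counit_left) (intro linear_intros)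
    then show ?thesis by (simp add: mult.assoc sum_pairs_mult_left)
  qed
  also have "\<dots> = sum_pairs (D h) (\<lambda>h1 r. sum_pairs (D r) (\<lambda>h2 h3. sum_pairs (D' h1)
      (\<lambda>p q. sum_pairs (D' h3) (\<lambda>r' s. e' (p * S h2 * r') * e q * e s))))"
    by (rule brace_compat) (intro linear_intros)
  also have "\<dots> = sum_pairs (D h) (\<lambda>h1 r. sum_pairs (D r) (\<lambda>h2 h3. e' (S h2) * (sum_pairs (D' h1)
      (\<lambda>p q. e' p * e q) * sum_pairs (D' h3) (\<lambda>r' s. e' r' * e s))))"
    by (simp only: sum_pairs_product) (simp add: H'.counit_mult sum_pairs_mult_left[symmetric] sum_pairs_mult_right[symmetric] ac_simps)
  also have "\<dots> = sum_pairs (D h) (\<lambda>h1 r. sum_pairs (D r) (\<lambda>h2 h3. e' (S h2) * (e h1 * e h3)))"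
  proof -
    have "\<And>y. sum_pairs (D' y) (\<lambda>u v. e' u * e v) = e y" by (rule H'.counit_left) (intro linear_intros)
    then show ?thesis by simp
  qed
  also have "\<dots> = sum_pairs (D h) (\<lambda>h1 r. e h1 * sum_pairs (D r) (\<lambda>h2 h3. e' (S h2) * e h3))"
    by (simp add: sum_pairs_mult_left[symmetric] sum_pairs_mult_right[symmetric] ac_simps)
  also have "\<dots> = sum_pairs (D h) (\<lambda>h1 r. e h1 * e' (S r))"
  proof -
    have "\<And>y. sum_pairs (D y) (\<lambda>u v. e' (S u) * e v) = e' (S y)"
      by (rule H.counit_right) (intro linear_intros)
    then show ?thesis by simp
  qed
  also have "\<dots> = e' (S h)" by (rule H.counit_left) (intro linear_intros)
  finally show ?thesis by (rule sym)
qed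

lemma counits_eq: "e' = e"
proof
  fix h
  have "e' h = sum_pairs (D h) (\<lambda>x y. e' x * e y)" by (rule H.counit_right[symmetric]) (intro linear_intros)
  also have "\<dots> = sum_pairs (D h) (\<lambda>x y. e' (x * S y))" by (simp add: counit'_S_eq_counit H'.counit_mult)
  also have "\<dots> = e h * e' 1" by (rule H.antipode_right) (intro linear_intros)
  finally show "e' h = e h" by (simp add: H'.counit_one)
qed

lemmas D'_counit_left = H'.counit_left[unfolded counits_eq]
lemmas D'_counit_right = H'.counit_right[unfolded counits_eq]
lemmas D'_antipode_left = H'.antipode_left[unfolded counits_eq]
lemmas D'_antipode_right = H'.antipode_right[unfolded counits_eq]

abbreviation rho :: "'a \<Rightarrow> ('a \<times> 'a) list" where "rho \<equiv> brace_rho D S D'"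

lemma sum_pairs_rho:
  "sum_pairs (rho a) F = sum_pairs (D a) (\<lambda>x y. sum_pairs (D' y) (\<lambda>u v. F (S x * u) v))"
  by (simp add: brace_rho_def)

lemma rho_linear: "lin_to_tensor sc rho"
proof (rule lin_to_tensorI)
  fix F assume F: "bilinear F"
  show "linear_form (\<lambda>a. sum_pairs (rho a) F)"
    unfolding sum_pairs_rho by (intro linear_intros bilinear_compose[OF F])
qed

lemma linear_form_rho_compose [linear_intros]:
  "bilinear F \<Longrightarrow> linear_endo g \<Longrightarrow> linear_form (\<lambda>x. sum_pairs (rho (g x)) F)"
  by (rule linear_form_tensor[OF rho_linear])



lemma D'_eq_D_rho:
  assumes \<beta>: "bilinear \<beta>"
  shows "sum_pairs (D' h) \<beta> = sum_pairs (D h) (\<lambda>h1 h2. sum_pairs (rho h2)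
      (\<lambda>w z. \<beta> (h1 * w) z))"
proof -
  note R = linear_intros bilinear_compose[OF \<beta>]
  have "sum_pairs (D' h) \<beta> = sum_pairs (D' h) (\<lambda>x y. sum_pairs (D y) (\<lambda>u v. e u * \<beta> x v))"
  proof -
    have "\<And>x y. sum_pairs (D y) (\<lambda>u v. e u * \<beta> x v) = \<beta> x y"
      by (rule H.counit_left) (intro R)
    then show ?thesis by simp
  qed
  also have "\<dots> = sum_pairs (D h) (\<lambda>h1 r. sum_pairs (D r) (\<lambda>h2 h3. sum_pairs (D' h1)
      (\<lambda>p q. sum_pairs (D' h3) (\<lambda>r' s. e q * \<beta> (p * S h2 * r') s))))"
    by (rule brace_compat) (intro R)
  also have "\<dots> = sum_pairs (D h) (\<lambda>h1 r. sum_pairs (D r) (\<lambda>h2 h3. sum_pairs (D' h3)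
      (\<lambda>r' s. sum_pairs (D' h1) (\<lambda>p q. e q * \<beta> (p * S h2 * r') s))))"
  proof -
    have "\<And>h1 h2 h3. sum_pairs (D' h1) (\<lambda>p q. sum_pairs (D' h3)
        (\<lambda>r' s. e q * \<beta> (p * S h2 * r') s))
       = sum_pairs (D' h3) (\<lambda>r' s. sum_pairs (D' h1)
           (\<lambda>p q. e q * \<beta> (p * S h2 * r') s))" by (rule sum_pairs_swap)
    then show ?thesis by simp
  qed
  also have "\<dots> = sum_pairs (D h) (\<lambda>h1 r. sum_pairs (D r) (\<lambda>h2 h3. sum_pairs (D' h3)
      (\<lambda>r' s. \<beta> (h1 * S h2 * r') s)))"
  proof -
    have "\<And>h1 h2 r' s. sum_pairs (D' h1) (\<lambda>p q. \<beta> (p * S h2 * r') s * e q)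
        = \<beta> (h1 * S h2 * r') s"
      by (rule D'_counit_right) (intro R)
    then show ?thesis by (simp add: mult.commute)
  qed
  also have "\<dots> = sum_pairs (D h) (\<lambda>h1 h2. sum_pairs (rho h2) (\<lambda>w z. \<beta> (h1 * w) z))"
    by (simp add: sum_pairs_rho mult.assoc)
  finally show ?thesis .
qed

lemma rho_coproduct:
  assumes \<gamma>: "trilinear \<gamma>"
  shows "sum_pairs (rho a) (\<lambda>w z. sum_pairs (D z) (\<lambda>u v. \<gamma> w u v))
      = sum_pairs (D a) (\<lambda>a1 a2. sum_pairs (rho a1) (\<lambda>w1 z1. sum_pairs (rho a2)
      (\<lambda>w2 z2. \<gamma> (w1 * w2) z1 z2)))"
proof -
  note R = linear_intros trilinear_compose[OF \<gamma>]
  have "sum_pairs (rho a) (\<lambda>w z. sum_pairs (D z) (\<lambda>u v. \<gamma> w u v))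
     = sum_pairs (D a) (\<lambda>x y. sum_pairs (D' y) (\<lambda>p z. sum_pairs (D z)
         (\<lambda>u v. \<gamma> (S x * p) u v)))"
    by (simp add: sum_pairs_rho)
  also have "\<dots> = sum_pairs (D a) (\<lambda>x y. sum_pairs (D y) (\<lambda>h1 r. sum_pairs (D r)
      (\<lambda>h2 h3. sum_pairs (D' h1) (\<lambda>p q. sum_pairs (D' h3)
      (\<lambda>r' s. \<gamma> (S x * (p * S h2 * r')) q s)))))"
  proof -
    have "\<And>x y. sum_pairs (D' y) (\<lambda>p z. sum_pairs (D z) (\<lambda>u v. \<gamma> (S x * p) u v)) =
      sum_pairs (D y) (\<lambda>h1 r. sum_pairs (D r) (\<lambda>h2 h3. sum_pairs (D' h1)
          (\<lambda>p q. sum_pairs (D' h3) (\<lambda>r' s. \<gamma> (S x * (p * S h2 * r')) q s))))"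
      by (rule brace_compat) (intro R)
    then show ?thesis by simp
  qed
  also have "\<dots> = sum_pairs (D a) (\<lambda>x y. sum_pairs (D y) (\<lambda>h1 r. sum_pairs (D r)
      (\<lambda>h2 h3. sum_pairs (D' h1) (\<lambda>p q. sum_pairs (D' h3)
      (\<lambda>r' s. \<gamma> (S x * p * (S h2 * r')) q s)))))"
    by (simp add: ac_simps)
  also have "\<dots> = sum_pairs (D a) (\<lambda>x y. sum_pairs (D y) (\<lambda>h1 r. sum_pairs (D' h1)
      (\<lambda>p q. sum_pairs (D r) (\<lambda>h2 h3. sum_pairs (D' h3)
      (\<lambda>r' s. \<gamma> (S x * p * (S h2 * r')) q s)))))"
    by (simp only: sum_pairs_swap[where t = "D _" and s = "D' _"])
  also have "\<dots> = sum_pairs (D a) (\<lambda>a1 a2. sum_pairs (D a1) (\<lambda>x y. sum_pairs (D' y)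
      (\<lambda>p q. sum_pairs (D a2) (\<lambda>h2 h3. sum_pairs (D' h3)
      (\<lambda>r' s. \<gamma> (S x * p * (S h2 * r')) q s)))))"
    by (rule H.coassoc[symmetric]) (intro R)
  also have "\<dots> = sum_pairs (D a) (\<lambda>a1 a2. sum_pairs (rho a1) (\<lambda>w1 z1. sum_pairs (rho a2)
      (\<lambda>w2 z2. \<gamma> (w1 * w2) z1 z2)))"
    by (simp add: sum_pairs_rho)
  finally show ?thesis .
qed

lemma rho_mult:
  assumes \<beta>: "bilinear \<beta>"
  shows "sum_pairs (rho (a * b)) \<beta> = sum_pairs (rho a) (\<lambda>x y. sum_pairs (rho b)
      (\<lambda>u v. \<beta> (x * u) (y * v)))"
proof -
  note R = linear_intros bilinear_compose[OF \<beta>]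
  have "sum_pairs (rho (a * b)) \<beta> = sum_pairs (D (a * b)) (\<lambda>x y. sum_pairs (D' y)
      (\<lambda>u v. \<beta> (S x * u) v))"
    by (simp add: sum_pairs_rho)
  also have "\<dots> = sum_pairs (D a) (\<lambda>x1 y1. sum_pairs (D b) (\<lambda>x2 y2. sum_pairs (D' (y1 * y2))
      (\<lambda>u v. \<beta> (S (x1 * x2) * u) v)))"
    by (rule H.coproduct_mult) (intro R)
  also have "\<dots> = sum_pairs (D a) (\<lambda>x1 y1. sum_pairs (D b) (\<lambda>x2 y2. sum_pairs (D' y1)
      (\<lambda>u1 v1. sum_pairs (D' y2) (\<lambda>u2 v2. \<beta> (S (x1 * x2) * (u1 * u2)) (v1 * v2)))))"
  proof -
    have "\<And>x1 x2 y1 y2. sum_pairs (D' (y1 * y2)) (\<lambda>u v. \<beta> (S (x1 * x2) * u) v)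
        = sum_pairs (D' y1) (\<lambda>u1 v1. sum_pairs (D' y2)
        (\<lambda>u2 v2. \<beta> (S (x1 * x2) * (u1 * u2)) (v1 * v2)))"
      by (rule H'.coproduct_mult) (intro R)
    then show ?thesis by simp
  qed
  also have "\<dots> = sum_pairs (D a) (\<lambda>x1 y1. sum_pairs (D' y1) (\<lambda>u1 v1. sum_pairs (D b)
      (\<lambda>x2 y2. sum_pairs (D' y2) (\<lambda>u2 v2. \<beta> (S (x1 * x2) * (u1 * u2)) (v1 * v2)))))"
    by (simp only: sum_pairs_swap[where t = "D b" and s = "D' _"])
  also have "\<dots> = sum_pairs (rho a) (\<lambda>x y. sum_pairs (rho b) (\<lambda>u v. \<beta> (x * u) (y * v)))"
    by (simp add: sum_pairs_rho H.antipode_mult ac_simps)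
  finally show ?thesis .
qed

lemma rho_one:
  assumes \<beta>: "bilinear \<beta>"
  shows "sum_pairs (rho 1) \<beta> = \<beta> 1 1"
proof -
  note R = linear_intros bilinear_compose[OF \<beta>]
  have "sum_pairs (rho 1) \<beta> = sum_pairs (D 1) (\<lambda>x y. sum_pairs (D' y)
      (\<lambda>u v. \<beta> (S x * u) v))"
    by (simp add: sum_pairs_rho)
  also have "\<dots> = sum_pairs (D' 1) (\<lambda>u v. \<beta> (S 1 * u) v)"
    by (rule H.coproduct_one) (intro R)
  also have "\<dots> = \<beta> 1 1"
    by (subst H'.coproduct_one) (intro R, simp add: H.antipode_one)
  finally show ?thesis .
qed

lemma rho_counit_left:
  assumes f: "linear_form f"
  shows "sum_pairs (rho a) (\<lambda>w z. e w * f z) = f a"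
proof -
  note R = linear_intros linear_form_compose[OF f]
  have "sum_pairs (rho a) (\<lambda>w z. e w * f z) = sum_pairs (D a) (\<lambda>x y. e (S x) * sum_pairs (D' y)
      (\<lambda>u v. e u * f v))"
    by (simp add: sum_pairs_rho H.counit_mult sum_pairs_mult_left mult.assoc)
  also have "\<dots> = sum_pairs (D a) (\<lambda>x y. e x * f y)"
  proof -
    have "\<And>y. sum_pairs (D' y) (\<lambda>u v. e u * f v) = f y" by (rule D'_counit_left) (intro R)
    then show ?thesis by (simp add: H.counit_antipode)
  qed
  also have "\<dots> = f a" by (rule H.counit_left) (intro R)
  finally show ?thesis .
qed

lemma rho_counit_right:
  assumes f: "linear_form f"
  shows "sum_pairs (rho a) (\<lambda>w z. f w * e z) = e a * f 1"
proof -
  note R = linear_intros linear_form_compose[OF f]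
  have "sum_pairs (rho a) (\<lambda>w z. f w * e z) = sum_pairs (D a) (\<lambda>x y. sum_pairs (D' y)
      (\<lambda>u v. f (S x * u) * e v))"
    by (simp add: sum_pairs_rho)
  also have "\<dots> = sum_pairs (D a) (\<lambda>x y. f (S x * y))"
  proof -
    have "\<And>x y. sum_pairs (D' y) (\<lambda>u v. f (S x * u) * e v) = f (S x * y)"
      by (rule D'_counit_right) (intro R)
    then show ?thesis by simp
  qed
  also have "\<dots> = e a * f 1" by (rule H.antipode_left) (intro R)
  finally show ?thesis .
qed

text \<open>Multiplying the first two legs by \<Delta>'(h_1) is undone by \<Delta>'(S h_1), because
  \<Delta>'(S a_1 a_2) \<otimes> a_3 = 1 \<otimes> 1 \<otimes> a; so such a factor can be cancelled.\<close>

lemma D'_antipode_expand: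
  fixes X :: "'a \<Rightarrow> ('a \<Rightarrow> 'a \<Rightarrow> 'a \<Rightarrow> 'k) \<Rightarrow> 'k"
  assumes X: "trilinear (\<lambda>p q h. X h (\<lambda>x y z. \<gamma> (p * x) (q * y) z))"
  shows "X a \<gamma> = sum_pairs (D a) (\<lambda>a1 r. sum_pairs (D' (S a1)) (\<lambda>p1 q1. sum_pairs (D r)
      (\<lambda>a2 a3. sum_pairs (D' a2) (\<lambda>p2 q2.
      X a3 (\<lambda>x y z. \<gamma> (p1 * (p2 * x)) (q1 * (q2 * y)) z)))))"
proof -
  define \<Phi> where "\<Phi> p q h = X h (\<lambda>x y z. \<gamma> (p * x) (q * y) z)" for p q h
  have \<Phi>_trilinear: "trilinear \<Phi>" unfolding \<Phi>_def by (rule X)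
  note R = linear_intros trilinear_compose[OF \<Phi>_trilinear]
  have "X a \<gamma> = \<Phi> 1 1 a" by (simp add: \<Phi>_def)
  also have "\<dots> = sum_pairs (D a) (\<lambda>y a3. e y * \<Phi> 1 1 a3)"
    by (rule H.counit_left[symmetric]) (intro R)
  also have "\<dots> = sum_pairs (D a) (\<lambda>y a3. sum_pairs (D y) (\<lambda>a1 a2. sum_pairs (D' (S a1 * a2))
      (\<lambda>p q. \<Phi> p q a3)))"
  proof -
    have "\<And>y a3. sum_pairs (D y) (\<lambda>a1 a2. sum_pairs (D' (S a1 * a2)) (\<lambda>p q. \<Phi> p q a3))
        = e y * sum_pairs (D' 1) (\<lambda>p q. \<Phi> p q a3)"
      by (rule H.antipode_left) (intro R)
    moreover have "\<And>a3. sum_pairs (D' 1) (\<lambda>p q. \<Phi> p q a3) = \<Phi> 1 1 a3"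
      by (rule H'.coproduct_one) (intro R)
    ultimately show ?thesis by simp
  qed
  also have "\<dots> = sum_pairs (D a) (\<lambda>a1 r. sum_pairs (D r) (\<lambda>a2 a3. sum_pairs (D' (S a1 * a2))
      (\<lambda>p q. \<Phi> p q a3)))"
    by (rule H.coassoc) (intro R)
  also have "\<dots> = sum_pairs (D a) (\<lambda>a1 r. sum_pairs (D r) (\<lambda>a2 a3. sum_pairs (D' (S a1))
      (\<lambda>p1 q1. sum_pairs (D' a2) (\<lambda>p2 q2. \<Phi> (p1 * p2) (q1 * q2) a3))))"
  proof -
    have "\<And>a1 a2 a3. sum_pairs (D' (S a1 * a2)) (\<lambda>p q. \<Phi> p q a3)
        = sum_pairs (D' (S a1)) (\<lambda>p1 q1. sum_pairs (D' a2) (\<lambda>p2 q2. \<Phi> (p1 * p2) (q1 * q2) a3))"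
      by (rule H'.coproduct_mult) (intro R)
    then show ?thesis by simp
  qed
  also have "\<dots> = sum_pairs (D a) (\<lambda>a1 r. sum_pairs (D' (S a1)) (\<lambda>p1 q1. sum_pairs (D r)
      (\<lambda>a2 a3. sum_pairs (D' a2) (\<lambda>p2 q2. \<Phi> (p1 * p2) (q1 * q2) a3))))"
    by (simp only: sum_pairs_swap[where t = "D _" and s = "D' (S _)"])
  also have "\<dots> = sum_pairs (D a) (\<lambda>a1 r. sum_pairs (D' (S a1)) (\<lambda>p1 q1. sum_pairs (D r)
      (\<lambda>a2 a3. sum_pairs (D' a2) (\<lambda>p2 q2.
      X a3 (\<lambda>x y z. \<gamma> (p1 * (p2 * x)) (q1 * (q2 * y)) z)))))"
    by (simp add: \<Phi>_def mult.assoc)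
  finally show ?thesis .
qed

lemma cancel_D'_left_factor:
  fixes X Y :: "'a \<Rightarrow> ('a \<Rightarrow> 'a \<Rightarrow> 'a \<Rightarrow> 'k) \<Rightarrow> 'k"
  assumes X: "trilinear (\<lambda>p q h. X h (\<lambda>x y z. \<gamma> (p * x) (q * y) z))"
    and Y: "trilinear (\<lambda>p q h. Y h (\<lambda>x y z. \<gamma> (p * x) (q * y) z))"
    and XY: "\<And>h \<gamma>. trilinear \<gamma> \<Longrightarrow> sum_pairs (D h) (\<lambda>h1 h2. sum_pairs (D' h1)
        (\<lambda>p q. X h2 (\<lambda>x y z. \<gamma> (p * x) (q * y) z)))
               = sum_pairs (D h) (\<lambda>h1 h2. sum_pairs (D' h1) (\<lambda>p q. Y h2
                   (\<lambda>x y z. \<gamma> (p * x) (q * y) z)))"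
    and \<gamma>: "trilinear \<gamma>"
  shows "X a \<gamma> = Y a \<gamma>"
proof -
  have inner_eq: "\<And>p1 q1 r. sum_pairs (D r) (\<lambda>a2 a3. sum_pairs (D' a2) (\<lambda>p2 q2. X a3
      (\<lambda>x y z. \<gamma> (p1 * (p2 * x)) (q1 * (q2 * y)) z)))
    = sum_pairs (D r) (\<lambda>a2 a3. sum_pairs (D' a2) (\<lambda>p2 q2. Y a3
        (\<lambda>x y z. \<gamma> (p1 * (p2 * x)) (q1 * (q2 * y)) z)))"
  proof -
    fix p1 q1 r
    have t: "trilinear (\<lambda>x y z. \<gamma> (p1 * x) (q1 * y) z)"
      by (intro trilinearI trilinear_compose[OF \<gamma>] linear_endo_mult_left linear_endo_id)
    show "?thesis p1 q1 r" using XY[OF t, of r] by simp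
  qed
  show ?thesis
    by (subst D'_antipode_expand[OF X], subst D'_antipode_expand[OF Y]) (simp only: inner_eq)
qed

abbreviation rho_D'_id where "rho_D'_id a \<gamma> \<equiv> sum_pairs (rho a) (\<lambda>w z. sum_pairs (D' w)
    (\<lambda>p q. \<gamma> p q z))"
abbreviation rho_id_rho where "rho_id_rho a \<gamma> \<equiv> sum_pairs (rho a) (\<lambda>w z. sum_pairs (rho z)
    (\<lambda>p q. \<gamma> w p q))"

lemma coassoc_left_via_rho:
  assumes \<gamma>: "trilinear \<gamma>"
  shows "sum_pairs (D' h) (\<lambda>x y. sum_pairs (D' x) (\<lambda>p q. \<gamma> p q y))
      = sum_pairs (D h) (\<lambda>h1 h2. sum_pairs (D' h1) (\<lambda>p q. rho_D'_id h2
      (\<lambda>x y z. \<gamma> (p * x) (q * y) z)))"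
proof -
  note R = linear_intros trilinear_compose[OF \<gamma>]
  have "sum_pairs (D' h) (\<lambda>x y. sum_pairs (D' x) (\<lambda>p q. \<gamma> p q y)) =
     sum_pairs (D h) (\<lambda>h1 h2. sum_pairs (rho h2) (\<lambda>w z. sum_pairs (D' (h1 * w))
         (\<lambda>p q. \<gamma> p q z)))"
    by (rule D'_eq_D_rho) (intro R)
  also have "\<dots> = sum_pairs (D h) (\<lambda>h1 h2. sum_pairs (rho h2) (\<lambda>w z. sum_pairs (D' h1)
      (\<lambda>p1 q1. sum_pairs (D' w) (\<lambda>p2 q2. \<gamma> (p1 * p2) (q1 * q2) z))))"
  proof -
    have "\<And>h1 w z. sum_pairs (D' (h1 * w)) (\<lambda>p q. \<gamma> p q z)
        = sum_pairs (D' h1) (\<lambda>p1 q1. sum_pairs (D' w) (\<lambda>p2 q2. \<gamma> (p1 * p2) (q1 * q2) z))"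
      by (rule H'.coproduct_mult) (intro R)
    then show ?thesis by simp
  qed
  also have "\<dots> = sum_pairs (D h) (\<lambda>h1 h2. sum_pairs (D' h1) (\<lambda>p1 q1. sum_pairs (rho h2)
      (\<lambda>w z. sum_pairs (D' w) (\<lambda>p2 q2. \<gamma> (p1 * p2) (q1 * q2) z))))"
    by (simp only: sum_pairs_swap[where t = "rho _" and s = "D' _"])
  finally show ?thesis .
qed

lemma coassoc_right_via_rho:
  assumes \<gamma>: "trilinear \<gamma>"
  shows "sum_pairs (D' h) (\<lambda>x y. sum_pairs (D' y) (\<lambda>q z. \<gamma> x q z))
      = sum_pairs (D h) (\<lambda>h1 h2. sum_pairs (D' h1) (\<lambda>p q. rho_id_rho h2
      (\<lambda>x y z. \<gamma> (p * x) (q * y) z)))"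
proof -
  note R = linear_intros trilinear_compose[OF \<gamma>]
  have "sum_pairs (D' h) (\<lambda>x y. sum_pairs (D' y) (\<lambda>q z. \<gamma> x q z)) =
     sum_pairs (D h) (\<lambda>h1 h2. sum_pairs (rho h2) (\<lambda>w y. sum_pairs (D' y)
         (\<lambda>q z. \<gamma> (h1 * w) q z)))"
    by (rule D'_eq_D_rho) (intro R)
  also have "\<dots> = sum_pairs (D h) (\<lambda>h1 h2. sum_pairs (rho h2) (\<lambda>w y. sum_pairs (D y)
      (\<lambda>y1 y2. sum_pairs (rho y2) (\<lambda>w' z. \<gamma> (h1 * w) (y1 * w') z))))"
  proof -
    have "\<And>h1 w y. sum_pairs (D' y) (\<lambda>q z. \<gamma> (h1 * w) q z)
        = sum_pairs (D y) (\<lambda>y1 y2. sum_pairs (rho y2) (\<lambda>w' z. \<gamma> (h1 * w) (y1 * w') z))"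
      by (rule D'_eq_D_rho) (intro R)
    then show ?thesis by simp
  qed
  also have "\<dots> = sum_pairs (D h) (\<lambda>h1 h2. sum_pairs (D h2) (\<lambda>a1 a2. sum_pairs (rho a1)
      (\<lambda>w1 z1. sum_pairs (rho a2) (\<lambda>w2 z2. sum_pairs (rho z2)
      (\<lambda>w' z. \<gamma> (h1 * (w1 * w2)) (z1 * w') z)))))"
  proof -
    have "\<And>h1 h2. sum_pairs (rho h2) (\<lambda>w y. sum_pairs (D y) (\<lambda>y1 y2. sum_pairs (rho y2)
        (\<lambda>w' z. \<gamma> (h1 * w) (y1 * w') z)))
      = sum_pairs (D h2) (\<lambda>a1 a2. sum_pairs (rho a1) (\<lambda>w1 z1. sum_pairs (rho a2)
          (\<lambda>w2 z2. sum_pairs (rho z2) (\<lambda>w' z. \<gamma> (h1 * (w1 * w2)) (z1 * w') z))))"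
      by (rule rho_coproduct) (intro R)
    then show ?thesis by simp
  qed
  also have "\<dots> = sum_pairs (D h) (\<lambda>t a2. sum_pairs (D t) (\<lambda>h1 a1. sum_pairs (rho a1)
      (\<lambda>w1 z1. sum_pairs (rho a2) (\<lambda>w2 z2. sum_pairs (rho z2)
      (\<lambda>w' z. \<gamma> (h1 * (w1 * w2)) (z1 * w') z)))))"
    by (rule H.coassoc[symmetric]) (intro R)
  also have "\<dots> = sum_pairs (D h) (\<lambda>t a2. sum_pairs (D t) (\<lambda>h1 a1. sum_pairs (rho a1)
      (\<lambda>w1 z1. sum_pairs (rho a2) (\<lambda>w2 z2. sum_pairs (rho z2)
      (\<lambda>w' z. \<gamma> (h1 * w1 * w2) (z1 * w') z)))))"
    by (simp add: mult.assoc)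
  also have "\<dots> = sum_pairs (D h) (\<lambda>t a2. sum_pairs (D' t) (\<lambda>p q. sum_pairs (rho a2)
      (\<lambda>w2 z2. sum_pairs (rho z2) (\<lambda>w' z. \<gamma> (p * w2) (q * w') z))))"
  proof -
    have "\<And>t a2. sum_pairs (D' t) (\<lambda>p q. sum_pairs (rho a2) (\<lambda>w2 z2. sum_pairs (rho z2)
        (\<lambda>w' z. \<gamma> (p * w2) (q * w') z)))
     = sum_pairs (D t) (\<lambda>h1 a1. sum_pairs (rho a1) (\<lambda>w1 z1. sum_pairs (rho a2)
         (\<lambda>w2 z2. sum_pairs (rho z2) (\<lambda>w' z. \<gamma> (h1 * w1 * w2) (z1 * w') z))))"
      by (rule D'_eq_D_rho) (intro R)
    then show ?thesis by simp
  qed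
  finally show ?thesis .
qed

lemma rho_coassoc:
  "trilinear \<gamma> \<Longrightarrow> rho_D'_id a \<gamma> = rho_id_rho a \<gamma>"
proof (rule cancel_D'_left_factor[where X = rho_D'_id and Y = rho_id_rho])
  assume \<gamma>: "trilinear \<gamma>"
  note R = linear_intros trilinear_compose[OF \<gamma>]
  show "trilinear (\<lambda>p q h. rho_D'_id h (\<lambda>x y z. \<gamma> (p * x) (q * y) z))" by (intro R)
  show "trilinear (\<lambda>p q h. rho_id_rho h (\<lambda>x y z. \<gamma> (p * x) (q * y) z))" by (intro R)
next
  fix h and \<gamma> :: "'a \<Rightarrow> 'a \<Rightarrow> 'a \<Rightarrow> 'k" assume \<gamma>: "trilinear \<gamma>"
  note R = linear_intros trilinear_compose[OF \<gamma>]
  show "sum_pairs (D h) (\<lambda>h1 h2. sum_pairs (D' h1) (\<lambda>p q. rho_D'_id h2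
      (\<lambda>x y z. \<gamma> (p * x) (q * y) z))) =
        sum_pairs (D h) (\<lambda>h1 h2. sum_pairs (D' h1) (\<lambda>p q. rho_id_rho h2
            (\<lambda>x y z. \<gamma> (p * x) (q * y) z)))"
    using coassoc_left_via_rho[OF \<gamma>, of h] coassoc_right_via_rho[OF \<gamma>, of h] H'.coassoc[OF \<gamma>, of h] by simp
qed

lemma rho_antipode_convolution_left:
  assumes \<beta>: "bilinear \<beta>"
  shows "sum_pairs (D a) (\<lambda>a1 a2. sum_pairs (rho (S a1)) (\<lambda>w1 z1. sum_pairs (rho a2)
      (\<lambda>w2 z2. \<beta> (w1 * w2) (z1 * z2)))) = e a * \<beta> 1 1"
proof -
  note R = linear_intros bilinear_compose[OF \<beta>]
  have "\<And>a1 a2. sum_pairs (rho (S a1)) (\<lambda>w1 z1. sum_pairs (rho a2)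
      (\<lambda>w2 z2. \<beta> (w1 * w2) (z1 * z2))) = sum_pairs (rho (S a1 * a2)) \<beta>"
    by (rule rho_mult[symmetric]) (intro R)
  moreover have "sum_pairs (D a) (\<lambda>a1 a2. sum_pairs (rho (S a1 * a2)) \<beta>)
      = e a * sum_pairs (rho 1) \<beta>"
    by (rule H.antipode_left) (intro R)
  ultimately show ?thesis using rho_one[OF \<beta>] by simp
qed

lemma rho_antipode_convolution_right:
  assumes \<beta>: "bilinear \<beta>"
  shows "sum_pairs (D a) (\<lambda>a1 a2. sum_pairs (rho a1) (\<lambda>w1 z1. sum_pairs (rho a2)
      (\<lambda>w2 z2. \<beta> (w1 * w2) (z1 * S z2)))) = e a * \<beta> 1 1"
proof -
  note R = linear_intros bilinear_compose[OF \<beta>]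
  have "sum_pairs (D a) (\<lambda>a1 a2. sum_pairs (rho a1) (\<lambda>w1 z1. sum_pairs (rho a2)
      (\<lambda>w2 z2. \<beta> (w1 * w2) (z1 * S z2))))
    = sum_pairs (rho a) (\<lambda>w z. sum_pairs (D z) (\<lambda>u v. \<beta> w (u * S v)))"
    by (rule rho_coproduct[symmetric]) (intro R)
  also have "\<dots> = sum_pairs (rho a) (\<lambda>w z. \<beta> w 1 * e z)"
  proof -
    have "\<And>w z. sum_pairs (D z) (\<lambda>u v. \<beta> w (u * S v)) = e z * \<beta> w 1"
      by (rule H.antipode_right) (intro R)
    then show ?thesis by (simp add: mult.commute)
  qed
  also have "\<dots> = e a * \<beta> 1 1" by (rule rho_counit_right) (intro R)
  finally show ?thesis .
qed

lemma rho_antipode: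
  assumes \<beta>: "bilinear \<beta>"
  shows "sum_pairs (rho a) (\<lambda>w z. \<beta> w (S z)) = sum_pairs (rho (S a)) \<beta>"
proof -
  note R = linear_intros bilinear_compose[OF \<beta>]
  define \<Psi> where "\<Psi> p q h = sum_pairs (rho h) (\<lambda>w z. \<beta> (p * w) (q * S z))" for p q h
  have \<Psi>_trilinear: "trilinear \<Psi>" unfolding \<Psi>_def by (intro R)
  note R = R trilinear_compose[OF \<Psi>_trilinear]
  have "sum_pairs (rho a) (\<lambda>w z. \<beta> w (S z)) = \<Psi> 1 1 a" by (simp add: \<Psi>_def)
  also have "\<dots> = sum_pairs (D a) (\<lambda>y a3. e y * \<Psi> 1 1 a3)"
    by (rule H.counit_left[symmetric]) (intro R)
  also have "\<dots> = sum_pairs (D a) (\<lambda>y a3. sum_pairs (D y) (\<lambda>a1 a2. sum_pairs (rho (S a1))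
      (\<lambda>w1 z1. sum_pairs (rho a2) (\<lambda>w2 z2. \<Psi> (w1 * w2) (z1 * z2) a3))))"
  proof -
    have "\<And>y a3. sum_pairs (D y) (\<lambda>a1 a2. sum_pairs (rho (S a1)) (\<lambda>w1 z1. sum_pairs (rho a2)
        (\<lambda>w2 z2. \<Psi> (w1 * w2) (z1 * z2) a3))) = e y * \<Psi> 1 1 a3"
      by (rule rho_antipode_convolution_left) (intro R)
    then show ?thesis by simp
  qed
  also have "\<dots> = sum_pairs (D a) (\<lambda>a1 r. sum_pairs (D r) (\<lambda>a2 a3. sum_pairs (rho (S a1))
      (\<lambda>w1 z1. sum_pairs (rho a2) (\<lambda>w2 z2. \<Psi> (w1 * w2) (z1 * z2) a3))))"
    by (rule H.coassoc) (intro R)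
  also have "\<dots> = sum_pairs (D a) (\<lambda>a1 r. sum_pairs (rho (S a1)) (\<lambda>w1 z1. sum_pairs (D r)
      (\<lambda>a2 a3. sum_pairs (rho a2) (\<lambda>w2 z2. \<Psi> (w1 * w2) (z1 * z2) a3))))"
    by (simp only: sum_pairs_swap[where t = "D _" and s = "rho (S _)"])
  also have "\<dots> = sum_pairs (D a) (\<lambda>a1 r. sum_pairs (rho (S a1)) (\<lambda>w1 z1. sum_pairs (D r)
      (\<lambda>a2 a3. sum_pairs (rho a2) (\<lambda>w2 z2. sum_pairs (rho a3)
      (\<lambda>w z. \<beta> (w1 * (w2 * w)) (z1 * (z2 * S z)))))))"
    by (simp add: \<Psi>_def mult.assoc H.antipode_mult)
  also have "\<dots> = sum_pairs (D a) (\<lambda>a1 r. sum_pairs (rho (S a1)) (\<lambda>w1 z1. e r * \<beta> w1 z1))"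
  proof -
    have "\<And>w1 z1 r. sum_pairs (D r) (\<lambda>a2 a3. sum_pairs (rho a2) (\<lambda>w2 z2. sum_pairs (rho a3)
        (\<lambda>w z. \<beta> (w1 * (w2 * w)) (z1 * (z2 * S z)))))
       = e r * \<beta> (w1 * 1) (z1 * 1)"
      by (rule rho_antipode_convolution_right[where \<beta> = "\<lambda>x y. \<beta> (_ * x) (_ * y)", simplified mult.assoc])
        (intro R)
    then show ?thesis by simp
  qed
  also have "\<dots> = sum_pairs (D a) (\<lambda>a1 r. sum_pairs (rho (S a1)) \<beta> * e r)"
    by (simp add: sum_pairs_mult_left mult.commute)
  also have "\<dots> = sum_pairs (rho (S a)) \<beta>"
    by (rule H.counit_right) (intro R)
  finally show ?thesis .
qed

lemma left_comodule_algebra_rho: "left_comodule_algebra sc D' e' rho"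
  unfolding left_comodule_algebra_def
proof (intro conjI allI)
  fix a
  show "sum_list (map (\<lambda>(w, v). sc (e' w) v) (rho a)) = a"
  proof (rule eq_if_linear_forms_eq)
    fix f assume "linear_form f"
    then show "f (sum_list (map (\<lambda>(w, v). sc (e' w) v) (rho a))) = f a"
      using linear_form_weighted_sum[of f "\<lambda>w v. e w" "\<lambda>w v. v"] by (simp add: counits_eq rho_counit_left)
  qed
qed (use rho_linear rho_coassoc rho_mult rho_one in \<open>simp_all add: teq2_iff teq3_iff tmul_def\<close>)

lemma rho_antipode_teq: "teq2 sc (map (\<lambda>(x, y). (x, S y)) (rho a)) (rho (S a))"
  unfolding teq2_iff using rho_antipode by simp

abbreviation phi :: "'a \<Rightarrow> ('a \<times> 'a) list" where
  "phi \<equiv> brace_phi D S D' T"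

lemma sum_pairs_phi:
  "sum_pairs (phi a) \<beta> =
    sum_pairs (D' a) (\<lambda>x r. sum_pairs (rho (T x)) (\<lambda>w v. sum_pairs (D' r)
        (\<lambda>y z. \<beta> (w * y) (v * z))))"
proof -
  have "\<And>x r. sum_pairs (D' r) (\<lambda>y z. sum_pairs (rho (T x)) (\<lambda>w v. \<beta> (w * y) (v * z))) =
      sum_pairs (rho (T x)) (\<lambda>w v. sum_pairs (D' r) (\<lambda>y z. \<beta> (w * y) (v * z)))"
    by (rule sum_pairs_swap)
  then show ?thesis
    by (simp add: brace_phi_def copR_def sum_pairs_rho)
qed

lemma phi_linear: "lin_to_tensor sc phi"
proof (rule lin_to_tensorI)
  fix F assume F: "bilinear F"
  show "linear_form (\<lambda>a. sum_pairs (phi a) F)"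
    unfolding sum_pairs_phi by (intro linear_intros bilinear_compose[OF F])
qed

lemma linear_form_phi_compose [linear_intros]:
  "bilinear F \<Longrightarrow> linear_endo g \<Longrightarrow> linear_form (\<lambda>x. sum_pairs (phi (g x)) F)"
  by (rule linear_form_tensor[OF phi_linear])


lemma counit_T_eq_counit: "e (T h) = e h"
  using H'.counit_antipode by (simp add: counits_eq)

lemma phi_one:
  assumes \<beta>: "bilinear \<beta>"
  shows "sum_pairs (phi 1) \<beta> = \<beta> 1 1"
proof -
  note R = linear_intros bilinear_compose[OF \<beta>]
  have "sum_pairs (phi 1) \<beta> = sum_pairs (rho (T 1)) (\<lambda>w v. sum_pairs (D' 1)
      (\<lambda>y z. \<beta> (w * y) (v * z)))"
    unfolding sum_pairs_phi by (rule H'.coproduct_one) (intro R)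
  also have "\<dots> = sum_pairs (rho 1) (\<lambda>w v. \<beta> (w * 1) (v * 1))"
  proof -
    have "\<And>w v. sum_pairs (D' 1) (\<lambda>y z. \<beta> (w * y) (v * z)) = \<beta> (w * 1) (v * 1)"
      by (rule H'.coproduct_one) (intro R)
    then show ?thesis by (simp add: H'.antipode_one)
  qed
  also have "\<dots> = \<beta> 1 1" by (subst rho_one) (intro R, simp)
  finally show ?thesis .
qed

lemma phi_counit:
  assumes f: "linear_form f"
  shows "sum_pairs (phi a) (\<lambda>v w. f v * e w) = f a"
proof -
  note R = linear_intros linear_form_compose[OF f]
  have "sum_pairs (phi a) (\<lambda>v w. f v * e w) = sum_pairs (D' a) (\<lambda>x r. sum_pairs (rho (T x))
      (\<lambda>w v. sum_pairs (D' r) (\<lambda>y z. f (w * y) * e z) * e v))"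
    by (simp add: sum_pairs_phi H.counit_mult sum_pairs_mult_left[symmetric] sum_pairs_mult_right[symmetric] ac_simps)
  also have "\<dots> = sum_pairs (D' a) (\<lambda>x r. sum_pairs (rho (T x)) (\<lambda>w v. f (w * r) * e v))"
  proof -
    have "\<And>w r. sum_pairs (D' r) (\<lambda>y z. f (w * y) * e z) = f (w * r)" by (rule D'_counit_right) (intro R)
    then show ?thesis by simp
  qed
  also have "\<dots> = sum_pairs (D' a) (\<lambda>x r. e (T x) * f (1 * r))"
  proof -
    have "\<And>x r. sum_pairs (rho (T x)) (\<lambda>w v. f (w * r) * e v) = e (T x) * f (1 * r)"
      by (rule rho_counit_right) (intro R)
    then show ?thesis by simp
  qed
  also have "\<dots> = f a" by (simp add: counit_T_eq_counit) (rule D'_counit_left, intro R)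
  finally show ?thesis .
qed

lemma phi_mult:
  assumes \<beta>: "bilinear \<beta>"
  shows "sum_pairs (phi (a * b)) \<beta> = sum_pairs (phi a) (\<lambda>x y. sum_pairs (phi b)
      (\<lambda>u v. \<beta> (x * u) (y * v)))"
proof -
  note R = linear_intros bilinear_compose[OF \<beta>]
  have "sum_pairs (phi (a * b)) \<beta> = sum_pairs (D' a) (\<lambda>x1 r1. sum_pairs (D' b)
      (\<lambda>x2 r2. sum_pairs (rho (T (x1 * x2))) (\<lambda>w v. sum_pairs (D' (r1 * r2))
      (\<lambda>y z. \<beta> (w * y) (v * z)))))"
    unfolding sum_pairs_phi by (rule H'.coproduct_mult) (intro R)
  also have "\<dots> = sum_pairs (D' a) (\<lambda>x1 r1. sum_pairs (D' b) (\<lambda>x2 r2. sum_pairs (rho (T x1))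
      (\<lambda>w1 v1. sum_pairs (rho (T x2)) (\<lambda>w2 v2.
       sum_pairs (D' r1) (\<lambda>y1 z1. sum_pairs (D' r2)
           (\<lambda>y2 z2. \<beta> (w1 * w2 * (y1 * y2)) (v1 * v2 * (z1 * z2))))))))"
  proof -
    have "\<And>w v r1 r2. sum_pairs (D' (r1 * r2)) (\<lambda>y z. \<beta> (w * y) (v * z))
        = sum_pairs (D' r1) (\<lambda>y1 z1. sum_pairs (D' r2)
        (\<lambda>y2 z2. \<beta> (w * (y1 * y2)) (v * (z1 * z2))))"
      by (rule H'.coproduct_mult) (intro R)
    moreover have "\<And>x1 x2 r1 r2. sum_pairs (rho (T x1 * T x2)) (\<lambda>w v. sum_pairs (D' r1)
        (\<lambda>y1 z1. sum_pairs (D' r2) (\<lambda>y2 z2. \<beta> (w * (y1 * y2)) (v * (z1 * z2)))))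
      = sum_pairs (rho (T x1)) (\<lambda>w1 v1. sum_pairs (rho (T x2)) (\<lambda>w2 v2. sum_pairs (D' r1)
          (\<lambda>y1 z1. sum_pairs (D' r2) (\<lambda>y2 z2. \<beta> (w1 * w2 * (y1 * y2)) (v1 * v2 * (z1 * z2))))))"
      by (rule rho_mult) (intro R)
    ultimately show ?thesis by (simp add: H'.antipode_mult)
  qed
  also have "\<dots> = sum_pairs (D' a) (\<lambda>x1 r1. sum_pairs (rho (T x1)) (\<lambda>w1 v1. sum_pairs (D' b)
      (\<lambda>x2 r2. sum_pairs (rho (T x2)) (\<lambda>w2 v2.
       sum_pairs (D' r1) (\<lambda>y1 z1. sum_pairs (D' r2)
           (\<lambda>y2 z2. \<beta> (w1 * w2 * (y1 * y2)) (v1 * v2 * (z1 * z2))))))))"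
    by (simp only: sum_pairs_swap[of "D' b"])
  also have "\<dots> = sum_pairs (D' a) (\<lambda>x1 r1. sum_pairs (rho (T x1)) (\<lambda>w1 v1. sum_pairs (D' b)
      (\<lambda>x2 r2. sum_pairs (D' r1) (\<lambda>y1 z1. sum_pairs (rho (T x2)) (\<lambda>w2 v2.
       sum_pairs (D' r2) (\<lambda>y2 z2. \<beta> (w1 * w2 * (y1 * y2)) (v1 * v2 * (z1 * z2))))))))"
    by (simp only: sum_pairs_swap[where t = "rho (T _)" and s = "D' _"])
  also have "\<dots> = sum_pairs (D' a) (\<lambda>x1 r1. sum_pairs (rho (T x1)) (\<lambda>w1 v1. sum_pairs (D' r1)
      (\<lambda>y1 z1. sum_pairs (D' b) (\<lambda>x2 r2. sum_pairs (rho (T x2)) (\<lambda>w2 v2.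
       sum_pairs (D' r2) (\<lambda>y2 z2. \<beta> (w1 * w2 * (y1 * y2)) (v1 * v2 * (z1 * z2))))))))"
    by (simp only: sum_pairs_swap[of "D' b"])
  also have "\<dots> = sum_pairs (phi a) (\<lambda>x y. sum_pairs (phi b) (\<lambda>u v. \<beta> (x * u) (y * v)))"
    by (simp add: sum_pairs_phi ac_simps)
  finally show ?thesis .
qed

lemma rho_D'_antipode_convolution:
  assumes \<beta>: "bilinear \<beta>"
  shows "sum_pairs (D' t) (\<lambda>x x'. sum_pairs (rho x) (\<lambda>w1 z1. sum_pairs (rho (T x'))
      (\<lambda>w2 z2. \<beta> (w1 * w2) (z1 * z2)))) = e t * \<beta> 1 1"
proof -
  note R = linear_intros bilinear_compose[OF \<beta>]
  have "\<And>x x'. sum_pairs (rho x) (\<lambda>w1 z1. sum_pairs (rho (T x')) (\<lambda>w2 z2. \<beta> (w1 * w2) (z1 * z2))) =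
      sum_pairs (rho (x * T x')) \<beta>"
    by (rule rho_mult[symmetric]) (intro R)
  moreover have "sum_pairs (D' t) (\<lambda>x x'. sum_pairs (rho (x * T x')) \<beta>) = e t * sum_pairs (rho 1) \<beta>"
    by (rule D'_antipode_right) (intro R)
  ultimately show ?thesis
    using rho_one[OF \<beta>] by simp
qed

lemma D'_eq_rho_phi:
  assumes \<beta>: "bilinear \<beta>"
  shows "sum_pairs (D' a) \<beta> = sum_pairs (D' a) (\<lambda>x y. sum_pairs (rho x)
      (\<lambda>w1 z1. sum_pairs (phi y) (\<lambda>w2 z2. \<beta> (w1 * w2) (z1 * z2))))"
proof -
  note R = linear_intros bilinear_compose[OF \<beta>]
  have "sum_pairs (D' a) \<beta> = sum_pairs (D' a) (\<lambda>t r. e t * sum_pairs (D' r) (\<lambda>y z. \<beta> (1 * y) (1 * z)))"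
    by (simp, rule D'_counit_left[symmetric]) (intro R)
  also have "\<dots> = sum_pairs (D' a) (\<lambda>t r. sum_pairs (D' t) (\<lambda>x x'. sum_pairs (rho x)
      (\<lambda>w1 z1. sum_pairs (rho (T x')) (\<lambda>w v. sum_pairs (D' r)
      (\<lambda>y' z. \<beta> (w1 * (w * y')) (z1 * (v * z)))))))"
  proof -
    have "\<And>t r. sum_pairs (D' t) (\<lambda>x x'. sum_pairs (rho x) (\<lambda>w1 z1. sum_pairs (rho (T x'))
        (\<lambda>w v. sum_pairs (D' r) (\<lambda>y' z. \<beta> (w1 * (w * y')) (z1 * (v * z)))))) =
      e t * sum_pairs (D' r) (\<lambda>y z. \<beta> (1 * y) (1 * z))"
      by (rule rho_D'_antipode_convolution[where \<beta> = "\<lambda>p q. sum_pairs (D' _) (\<lambda>y z. \<beta> (p * y) (q * z))",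
            simplified mult.assoc]) (intro R)
    then show ?thesis by simp
  qed
  also have "\<dots> = sum_pairs (D' a) (\<lambda>x y. sum_pairs (D' y) (\<lambda>x' r. sum_pairs (rho x)
      (\<lambda>w1 z1. sum_pairs (rho (T x')) (\<lambda>w v. sum_pairs (D' r)
      (\<lambda>y' z. \<beta> (w1 * (w * y')) (z1 * (v * z)))))))"
    by (rule H'.coassoc) (intro R)
  also have "\<dots> = sum_pairs (D' a) (\<lambda>x y. sum_pairs (rho x) (\<lambda>w1 z1. sum_pairs (D' y)
      (\<lambda>x' r. sum_pairs (rho (T x')) (\<lambda>w v. sum_pairs (D' r)
      (\<lambda>y' z. \<beta> (w1 * (w * y')) (z1 * (v * z)))))))"
    by (simp only: sum_pairs_swap[where t = "D' _" and s = "rho _"])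
  also have "\<dots> = sum_pairs (D' a) (\<lambda>x y. sum_pairs (rho x) (\<lambda>w1 z1. sum_pairs (phi y)
      (\<lambda>w2 z2. \<beta> (w1 * w2) (z1 * z2))))"
    by (simp add: sum_pairs_phi mult.assoc)
  finally show ?thesis .
qed

abbreviation rho_id_D' where "rho_id_D' a \<gamma> \<equiv> sum_pairs (rho a) (\<lambda>w z. sum_pairs (D' z)
    (\<lambda>p q. \<gamma> w p q))"

lemma rho_id_D'_eq_rho_D'_id:
  assumes \<gamma>: "trilinear \<gamma>"
  shows "rho_id_D' a \<gamma> =
    sum_pairs (D a) (\<lambda>a1 a2. sum_pairs (rho a1) (\<lambda>w1 z1. rho_D'_id a2
        (\<lambda>p q z. \<gamma> (w1 * p) (z1 * q) z)))"
proof -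
  note R = linear_intros trilinear_compose[OF \<gamma>]
  have "\<And>w z. sum_pairs (D' z) (\<lambda>p q. \<gamma> w p q) =
      sum_pairs (D z) (\<lambda>z1 z2. sum_pairs (rho z2) (\<lambda>w' z'. \<gamma> w (z1 * w') z'))"
    by (rule D'_eq_D_rho) (intro R)
  then have "rho_id_D' a \<gamma> =
      sum_pairs (rho a) (\<lambda>w z. sum_pairs (D z) (\<lambda>z1 z2. sum_pairs (rho z2)
          (\<lambda>w' z'. \<gamma> w (z1 * w') z')))"
    by simp
  also have "\<dots> = sum_pairs (D a) (\<lambda>a1 a2. sum_pairs (rho a1) (\<lambda>w1 z1.
      rho_id_rho a2 (\<lambda>w2 w' z'. \<gamma> (w1 * w2) (z1 * w') z')))"
    by (rule rho_coproduct) (intro R)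
  also have "\<dots> = sum_pairs (D a) (\<lambda>a1 a2. sum_pairs (rho a1) (\<lambda>w1 z1. rho_D'_id a2
      (\<lambda>p q z. \<gamma> (w1 * p) (z1 * q) z)))"
  proof -
    have "\<And>w1 z1 a2. rho_id_rho a2 (\<lambda>w2 w' z'. \<gamma> (w1 * w2) (z1 * w') z') =
        rho_D'_id a2 (\<lambda>p q z. \<gamma> (w1 * p) (z1 * q) z)"
      by (rule rho_coassoc[symmetric]) (intro R)
    then show ?thesis by simp
  qed
  finally show ?thesis .
qed

lemma rho_D'_id_via_phi:
  assumes \<gamma>: "trilinear \<gamma>"
  shows "rho_D'_id a \<gamma> = sum_pairs (rho a) (\<lambda>x m. sum_pairs (rho x) (\<lambda>s1 t1.
      sum_pairs (rho m) (\<lambda>y z. sum_pairs (phi y) (\<lambda>s2 t2. \<gamma> (s1 * s2) (t1 * t2) z))))"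
proof -
  note R = linear_intros trilinear_compose[OF \<gamma>]
  have "\<And>n z. sum_pairs (D' n) (\<lambda>p q. \<gamma> p q z) =
      sum_pairs (D' n) (\<lambda>p q. sum_pairs (rho p) (\<lambda>s1 t1. sum_pairs (phi q)
          (\<lambda>s2 t2. \<gamma> (s1 * s2) (t1 * t2) z)))"
    by (rule D'_eq_rho_phi) (intro R)
  then have "rho_D'_id a \<gamma> =
      rho_D'_id a (\<lambda>p q z. sum_pairs (rho p) (\<lambda>s1 t1. sum_pairs (phi q)
          (\<lambda>s2 t2. \<gamma> (s1 * s2) (t1 * t2) z)))"
    by simp
  also have "\<dots> = rho_id_rho a (\<lambda>p m z. sum_pairs (rho p) (\<lambda>s1 t1. sum_pairs (phi m)
      (\<lambda>s2 t2. \<gamma> (s1 * s2) (t1 * t2) z)))"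
    by (rule rho_coassoc) (intro R)
  also have "\<dots> = sum_pairs (rho a) (\<lambda>x m. sum_pairs (rho x) (\<lambda>s1 t1.
      sum_pairs (rho m) (\<lambda>y z. sum_pairs (phi y) (\<lambda>s2 t2. \<gamma> (s1 * s2) (t1 * t2) z))))"
  proof -
    have "\<And>x m. sum_pairs (rho m) (\<lambda>y z. sum_pairs (rho x) (\<lambda>s1 t1. sum_pairs (phi y)
        (\<lambda>s2 t2. \<gamma> (s1 * s2) (t1 * t2) z))) =
        sum_pairs (rho x) (\<lambda>s1 t1. sum_pairs (rho m) (\<lambda>y z. sum_pairs (phi y)
            (\<lambda>s2 t2. \<gamma> (s1 * s2) (t1 * t2) z)))"
      by (rule sum_pairs_swap)
    then show ?thesis by simp
  qed
  finally show ?thesis .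
qed

lemma rho_id_D'_via_phi:
  assumes \<gamma>: "trilinear \<gamma>"
  shows "rho_id_D' a \<gamma> = sum_pairs (D' a) (\<lambda>x y. sum_pairs (rho x) (\<lambda>w1 z1.
      sum_pairs (rho y) (\<lambda>w2 z2. sum_pairs (phi w2) (\<lambda>u1 u2. \<gamma> (w1 * u1) (z1 * u2) z2))))"
proof -
  note R = linear_intros trilinear_compose[OF \<gamma>]
  have "\<And>w1 z1 a2. rho_D'_id a2 (\<lambda>p q z. \<gamma> (w1 * p) (z1 * q) z) =
      sum_pairs (rho a2) (\<lambda>x m. sum_pairs (rho x) (\<lambda>s1 t1.
        sum_pairs (rho m) (\<lambda>y z. sum_pairs (phi y)
            (\<lambda>s2 t2. \<gamma> (w1 * (s1 * s2)) (z1 * (t1 * t2)) z))))"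
    by (rule rho_D'_id_via_phi) (intro R)
  moreover have "\<And>a1 a2. sum_pairs (rho a1) (\<lambda>w1 z1. sum_pairs (rho a2)
      (\<lambda>x m. sum_pairs (rho x) (\<lambda>s1 t1.
        sum_pairs (rho m) (\<lambda>y z. sum_pairs (phi y)
            (\<lambda>s2 t2. \<gamma> (w1 * (s1 * s2)) (z1 * (t1 * t2)) z))))) =
      sum_pairs (rho a2) (\<lambda>x m. sum_pairs (rho a1) (\<lambda>w1 z1. sum_pairs (rho x) (\<lambda>s1 t1.
        sum_pairs (rho m) (\<lambda>y z. sum_pairs (phi y)
            (\<lambda>s2 t2. \<gamma> (w1 * (s1 * s2)) (z1 * (t1 * t2)) z)))))"
    by (rule sum_pairs_swap)
  moreover have "\<And>a1 x m. sum_pairs (rho a1) (\<lambda>w1 z1. sum_pairs (rho x) (\<lambda>s1 t1.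
        sum_pairs (rho m) (\<lambda>y z. sum_pairs (phi y)
            (\<lambda>s2 t2. \<gamma> (w1 * s1 * s2) (z1 * t1 * t2) z)))) =
      sum_pairs (rho (a1 * x)) (\<lambda>X Y. sum_pairs (rho m) (\<lambda>y z. sum_pairs (phi y)
          (\<lambda>s2 t2. \<gamma> (X * s2) (Y * t2) z)))"
    by (rule rho_mult[symmetric]) (intro R)
  ultimately have "rho_id_D' a \<gamma> = sum_pairs (D a) (\<lambda>a1 a2. sum_pairs (rho a2) (\<lambda>x m.
      sum_pairs (rho (a1 * x)) (\<lambda>X Y. sum_pairs (rho m) (\<lambda>y z. sum_pairs (phi y)
          (\<lambda>s2 t2. \<gamma> (X * s2) (Y * t2) z)))))"
    using rho_id_D'_eq_rho_D'_id[OF \<gamma>, of a] by (simp add: mult.assoc)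
  also have "\<dots> = sum_pairs (D' a) (\<lambda>x y. sum_pairs (rho x) (\<lambda>w1 z1.
      sum_pairs (rho y) (\<lambda>w2 z2. sum_pairs (phi w2) (\<lambda>u1 u2. \<gamma> (w1 * u1) (z1 * u2) z2))))"
    by (rule D'_eq_D_rho[symmetric]) (intro R)
  finally show ?thesis .
qed

lemma rho_id_D'_mult:
  assumes \<gamma>: "trilinear \<gamma>"
  shows "rho_id_D' (a * b) \<gamma> = rho_id_D' a (\<lambda>x1 y1 z1. rho_id_D' b
      (\<lambda>x2 y2 z2. \<gamma> (x1 * x2) (y1 * y2) (z1 * z2)))"
proof -
  note R = linear_intros trilinear_compose[OF \<gamma>]
  have "rho_id_D' (a * b) \<gamma> = sum_pairs (rho a) (\<lambda>w1 z1. sum_pairs (rho b)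
      (\<lambda>w2 z2. sum_pairs (D' (z1 * z2)) (\<lambda>p q. \<gamma> (w1 * w2) p q)))"
    by (rule rho_mult) (intro R)
  also have "\<dots> = sum_pairs (rho a) (\<lambda>w1 z1. sum_pairs (rho b) (\<lambda>w2 z2. sum_pairs (D' z1)
      (\<lambda>p1 q1. sum_pairs (D' z2) (\<lambda>p2 q2. \<gamma> (w1 * w2) (p1 * p2) (q1 * q2)))))"
  proof -
    have "\<And>w1 w2 z1 z2. sum_pairs (D' (z1 * z2)) (\<lambda>p q. \<gamma> (w1 * w2) p q)
        = sum_pairs (D' z1) (\<lambda>p1 q1. sum_pairs (D' z2)
        (\<lambda>p2 q2. \<gamma> (w1 * w2) (p1 * p2) (q1 * q2)))"
      by (rule H'.coproduct_mult) (intro R)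
    then show ?thesis by simp
  qed
  also have "\<dots> = sum_pairs (rho a) (\<lambda>w1 z1. sum_pairs (D' z1) (\<lambda>p1 q1. sum_pairs (rho b)
      (\<lambda>w2 z2. sum_pairs (D' z2) (\<lambda>p2 q2. \<gamma> (w1 * w2) (p1 * p2) (q1 * q2)))))"
    by (simp only: sum_pairs_swap[where t = "rho b" and s = "D' _"])
  finally show ?thesis .
qed

lemma rho_id_D'_one:
  assumes \<gamma>: "trilinear \<gamma>"
  shows "rho_id_D' 1 \<gamma> = \<gamma> 1 1 1"
proof -
  note R = linear_intros trilinear_compose[OF \<gamma>]
  have "rho_id_D' 1 \<gamma> = sum_pairs (D' 1) (\<lambda>p q. \<gamma> 1 p q)" by (rule rho_one) (intro R)
  also have "\<dots> = \<gamma> 1 1 1" by (rule H'.coproduct_one) (intro R)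
  finally show ?thesis .
qed

lemma rho_id_D'_antipode_convolution:
  assumes \<gamma>: "trilinear \<gamma>"
  shows "sum_pairs (D' y) (\<lambda>a1 a2. rho_id_D' (T a1 * a2) \<gamma>) = e y * \<gamma> 1 1 1"
proof -
  have "sum_pairs (D' y) (\<lambda>a1 a2. rho_id_D' (T a1 * a2) \<gamma>) = e y * rho_id_D' 1 \<gamma>"
    by (rule D'_antipode_left) (intro linear_intros trilinear_compose[OF \<gamma>])
  then show ?thesis
    using rho_id_D'_one[OF \<gamma>] by simp
qed

text \<open>The same cancellation, now for the factor (id \<otimes> \<Delta>')\<rho>(h_1'), which is multiplicative and is undone
  by (id \<otimes> \<Delta>')\<rho>(T h_1').\<close>

lemma rho_id_D'_antipode_expand:
  fixes X :: "'a \<Rightarrow> ('a \<Rightarrow> 'a \<Rightarrow> 'a \<Rightarrow> 'k) \<Rightarrow> 'k"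
  assumes X: "quadrilinear (\<lambda>x1 y1 z1 h. X h (\<lambda>x y z. \<gamma> (x1 * x) (y1 * y) (z1 * z)))"
  shows "X a \<gamma> = sum_pairs (D' a) (\<lambda>a1 r. rho_id_D' (T a1) (\<lambda>x1 y1 z1. sum_pairs (D' r)
      (\<lambda>a2 a3. rho_id_D' a2 (\<lambda>x2 y2 z2.
      X a3 (\<lambda>x y z. \<gamma> (x1 * (x2 * x)) (y1 * (y2 * y)) (z1 * (z2 * z)))))))"
proof -
  define \<Phi> where "\<Phi> x1 y1 z1 h = X h (\<lambda>x y z. \<gamma> (x1 * x) (y1 * y) (z1 * z))" for x1 y1 z1 h
  have \<Phi>_quadrilinear: "quadrilinear \<Phi>" unfolding \<Phi>_def by (rule X)
  note R = linear_intros quadrilinear_compose[OF \<Phi>_quadrilinear]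
  have "X a \<gamma> = \<Phi> 1 1 1 a" by (simp add: \<Phi>_def)
  also have "\<dots> = sum_pairs (D' a) (\<lambda>y a3. e y * \<Phi> 1 1 1 a3)"
    by (rule D'_counit_left[symmetric]) (intro R)
  also have "\<dots> = sum_pairs (D' a) (\<lambda>y a3. sum_pairs (D' y) (\<lambda>a1 a2. rho_id_D' (T a1 * a2)
      (\<lambda>x1 y1 z1. \<Phi> x1 y1 z1 a3)))"
  proof -
    have "\<And>y a3. sum_pairs (D' y) (\<lambda>a1 a2. rho_id_D' (T a1 * a2) (\<lambda>x1 y1 z1. \<Phi> x1 y1 z1 a3))
        = e y * \<Phi> 1 1 1 a3"
      by (rule rho_id_D'_antipode_convolution) (intro R)
    then show ?thesis by simp
  qed
  also have "\<dots> = sum_pairs (D' a) (\<lambda>a1 r. sum_pairs (D' r) (\<lambda>a2 a3. rho_id_D' (T a1 * a2)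
      (\<lambda>x1 y1 z1. \<Phi> x1 y1 z1 a3)))"
    by (rule H'.coassoc) (intro R)
  also have "\<dots> = sum_pairs (D' a) (\<lambda>a1 r. sum_pairs (D' r) (\<lambda>a2 a3. rho_id_D' (T a1)
      (\<lambda>x1 y1 z1. rho_id_D' a2 (\<lambda>x2 y2 z2. \<Phi> (x1 * x2) (y1 * y2) (z1 * z2) a3))))"
  proof -
    have "\<And>a1 a2 a3. rho_id_D' (T a1 * a2) (\<lambda>x1 y1 z1. \<Phi> x1 y1 z1 a3)
        = rho_id_D' (T a1) (\<lambda>x1 y1 z1. rho_id_D' a2
        (\<lambda>x2 y2 z2. \<Phi> (x1 * x2) (y1 * y2) (z1 * z2) a3))"
      by (rule rho_id_D'_mult) (intro R)
    then show ?thesis by simp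
  qed
  also have "\<dots> = sum_pairs (D' a) (\<lambda>a1 r. sum_pairs (rho (T a1)) (\<lambda>w z. sum_pairs (D' r)
      (\<lambda>a2 a3. sum_pairs (D' z) (\<lambda>p q. rho_id_D' a2
      (\<lambda>x2 y2 z2. \<Phi> (w * x2) (p * y2) (q * z2) a3)))))"
    by (simp only: sum_pairs_swap[where t = "D' _" and s = "rho (T _)"])
  also have "\<dots> = sum_pairs (D' a) (\<lambda>a1 r. sum_pairs (rho (T a1)) (\<lambda>w z. sum_pairs (D' z)
      (\<lambda>p q. sum_pairs (D' r) (\<lambda>a2 a3. rho_id_D' a2
      (\<lambda>x2 y2 z2. \<Phi> (w * x2) (p * y2) (q * z2) a3)))))"
  proof -
    have "\<And>w z r. sum_pairs (D' r) (\<lambda>a2 a3. sum_pairs (D' z) (\<lambda>p q. rho_id_D' a2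
        (\<lambda>x2 y2 z2. \<Phi> (w * x2) (p * y2) (q * z2) a3)))
       = sum_pairs (D' z) (\<lambda>p q. sum_pairs (D' r) (\<lambda>a2 a3. rho_id_D' a2
           (\<lambda>x2 y2 z2. \<Phi> (w * x2) (p * y2) (q * z2) a3)))"
      by (rule sum_pairs_swap)
    then show ?thesis by simp
  qed
  also have "\<dots> = sum_pairs (D' a) (\<lambda>a1 r. rho_id_D' (T a1) (\<lambda>x1 y1 z1. sum_pairs (D' r)
      (\<lambda>a2 a3. rho_id_D' a2 (\<lambda>x2 y2 z2.
      X a3 (\<lambda>x y z. \<gamma> (x1 * (x2 * x)) (y1 * (y2 * y)) (z1 * (z2 * z)))))))"
    by (simp add: \<Phi>_def mult.assoc)
  finally show ?thesis .
qed

lemma cancel_rho_id_D'_left_factor: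
  fixes X Y :: "'a \<Rightarrow> ('a \<Rightarrow> 'a \<Rightarrow> 'a \<Rightarrow> 'k) \<Rightarrow> 'k"
  assumes X: "quadrilinear (\<lambda>x1 y1 z1 h. X h (\<lambda>x y z. \<gamma> (x1 * x) (y1 * y) (z1 * z)))"
    and Y: "quadrilinear (\<lambda>x1 y1 z1 h. Y h (\<lambda>x y z. \<gamma> (x1 * x) (y1 * y) (z1 * z)))"
    and XY: "\<And>h \<gamma>. trilinear \<gamma> \<Longrightarrow> sum_pairs (D' h) (\<lambda>h1 h2. rho_id_D' h1
        (\<lambda>x1 y1 z1. X h2 (\<lambda>x y z. \<gamma> (x1 * x) (y1 * y) (z1 * z))))
               = sum_pairs (D' h) (\<lambda>h1 h2. rho_id_D' h1 (\<lambda>x1 y1 z1. Y h2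
                   (\<lambda>x y z. \<gamma> (x1 * x) (y1 * y) (z1 * z))))"
    and \<gamma>: "trilinear \<gamma>"
  shows "X a \<gamma> = Y a \<gamma>"
proof -
  have inner_eq: "\<And>x1 y1 z1 r. sum_pairs (D' r) (\<lambda>a2 a3. rho_id_D' a2 (\<lambda>x2 y2 z2. X a3
      (\<lambda>x y z. \<gamma> (x1 * (x2 * x)) (y1 * (y2 * y)) (z1 * (z2 * z)))))
    = sum_pairs (D' r) (\<lambda>a2 a3. rho_id_D' a2 (\<lambda>x2 y2 z2. Y a3
        (\<lambda>x y z. \<gamma> (x1 * (x2 * x)) (y1 * (y2 * y)) (z1 * (z2 * z)))))"
  proof -
    fix x1 y1 z1 r
    have t: "trilinear (\<lambda>x y z. \<gamma> (x1 * x) (y1 * y) (z1 * z))"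
      by (intro trilinearI trilinear_compose[OF \<gamma>] linear_endo_mult_left linear_endo_id)
    show "?thesis x1 y1 z1 r" using XY[OF t, of r] by simp
  qed
  show ?thesis
    by (subst rho_id_D'_antipode_expand[OF X], subst rho_id_D'_antipode_expand[OF Y]) (simp only: inner_eq)
qed

abbreviation phi_phi_id where "phi_phi_id a \<gamma> \<equiv> sum_pairs (phi a) (\<lambda>v w. sum_pairs (phi v)
    (\<lambda>x y. \<gamma> x y w))"
abbreviation phi_id_D' where "phi_id_D' a \<gamma> \<equiv> sum_pairs (phi a) (\<lambda>v w. sum_pairs (D' w)
    (\<lambda>y z. \<gamma> v y z))"

lemma coassoc_right_via_phi:
  assumes \<gamma>: "trilinear \<gamma>"
  shows "sum_pairs (D' h) (\<lambda>h1 h2. rho_id_D' h1 (\<lambda>x1 y1 z1. phi_id_D' h2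
      (\<lambda>x y z. \<gamma> (x1 * x) (y1 * y) (z1 * z))))
      = sum_pairs (D' h) (\<lambda>s t. sum_pairs (D' t) (\<lambda>y z. \<gamma> s y z))"
proof -
  note R = linear_intros trilinear_compose[OF \<gamma>]
  have "sum_pairs (D' h) (\<lambda>h1 h2. rho_id_D' h1 (\<lambda>x1 y1 z1. phi_id_D' h2
      (\<lambda>x y z. \<gamma> (x1 * x) (y1 * y) (z1 * z))))
    = sum_pairs (D' h) (\<lambda>h1 h2. sum_pairs (rho h1) (\<lambda>w1 m1. sum_pairs (phi h2)
        (\<lambda>v w. sum_pairs (D' m1) (\<lambda>y1 z1. sum_pairs (D' w)
        (\<lambda>y z. \<gamma> (w1 * v) (y1 * y) (z1 * z))))))"
    by (simp only: sum_pairs_swap[where t = "D' _" and s = "phi _"])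
  also have "\<dots> = sum_pairs (D' h) (\<lambda>h1 h2. sum_pairs (rho h1) (\<lambda>w1 m1. sum_pairs (phi h2)
      (\<lambda>v w. sum_pairs (D' (m1 * w)) (\<lambda>y z. \<gamma> (w1 * v) y z))))"
  proof -
    have "\<And>w1 m1 v w. sum_pairs (D' (m1 * w)) (\<lambda>y z. \<gamma> (w1 * v) y z)
        = sum_pairs (D' m1) (\<lambda>y1 z1. sum_pairs (D' w) (\<lambda>y z. \<gamma> (w1 * v) (y1 * y) (z1 * z)))"
      by (rule H'.coproduct_mult) (intro R)
    then show ?thesis by simp
  qed
  also have "\<dots> = sum_pairs (D' h) (\<lambda>s t. sum_pairs (D' t) (\<lambda>y z. \<gamma> s y z))"
    by (rule D'_eq_rho_phi[symmetric]) (intro R)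
  finally show ?thesis .
qed

lemma D'_phi_id_via_phi_phi_id:
  assumes \<gamma>: "trilinear \<gamma>"
  shows "sum_pairs (D' c) (\<lambda>b h. sum_pairs (rho b) (\<lambda>w2 z2. sum_pairs (phi w2) (\<lambda>u1 u2.
      phi_phi_id h (\<lambda>x y z. \<gamma> (u1 * x) (u2 * y) (z2 * z))))) =
    sum_pairs (D' c) (\<lambda>s t. sum_pairs (phi s) (\<lambda>x y. \<gamma> x y t))"
proof -
  note R = linear_intros trilinear_compose[OF \<gamma>]
  have "\<And>w2 z2 h. sum_pairs (phi w2) (\<lambda>u1 u2. phi_phi_id h
      (\<lambda>x y z. \<gamma> (u1 * x) (u2 * y) (z2 * z))) =
      sum_pairs (phi h) (\<lambda>v w. sum_pairs (phi w2) (\<lambda>u1 u2. sum_pairs (phi v)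
          (\<lambda>x y. \<gamma> (u1 * x) (u2 * y) (z2 * w))))"
    by (rule sum_pairs_swap)
  moreover have "\<And>w2 z2 v w. sum_pairs (phi w2) (\<lambda>u1 u2. sum_pairs (phi v)
      (\<lambda>x y. \<gamma> (u1 * x) (u2 * y) (z2 * w))) =
      sum_pairs (phi (w2 * v)) (\<lambda>x y. \<gamma> x y (z2 * w))"
    by (rule phi_mult[symmetric]) (intro R)
  moreover have "sum_pairs (D' c) (\<lambda>s t. sum_pairs (phi s) (\<lambda>x y. \<gamma> x y t)) =
      sum_pairs (D' c) (\<lambda>b h. sum_pairs (rho b) (\<lambda>w2 z2. sum_pairs (phi h) (\<lambda>v w.
        sum_pairs (phi (w2 * v)) (\<lambda>x y. \<gamma> x y (z2 * w)))))"
    by (rule D'_eq_rho_phi) (intro R)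
  ultimately show ?thesis by simp
qed

lemma coassoc_left_via_phi:
  assumes \<gamma>: "trilinear \<gamma>"
  shows "sum_pairs (D' h) (\<lambda>h1 h2. rho_id_D' h1 (\<lambda>x1 y1 z1. phi_phi_id h2
      (\<lambda>x y z. \<gamma> (x1 * x) (y1 * y) (z1 * z)))) =
    sum_pairs (D' h) (\<lambda>d t. sum_pairs (D' d) (\<lambda>p q. \<gamma> p q t))"
proof -
  note R = linear_intros trilinear_compose[OF \<gamma>]
  have "\<And>h1 h2. rho_id_D' h1 (\<lambda>x1 y1 z1. phi_phi_id h2
      (\<lambda>x y z. \<gamma> (x1 * x) (y1 * y) (z1 * z))) =
      sum_pairs (D' h1) (\<lambda>a b. sum_pairs (rho a) (\<lambda>w1 z1. sum_pairs (rho b)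
          (\<lambda>w2 z2. sum_pairs (phi w2) (\<lambda>u1 u2.
         phi_phi_id h2 (\<lambda>x y z. \<gamma> (w1 * u1 * x) (z1 * u2 * y) (z2 * z))))))"
    by (rule rho_id_D'_via_phi) (intro R)
  then have "sum_pairs (D' h) (\<lambda>h1 h2. rho_id_D' h1 (\<lambda>x1 y1 z1. phi_phi_id h2
      (\<lambda>x y z. \<gamma> (x1 * x) (y1 * y) (z1 * z)))) =
      sum_pairs (D' h) (\<lambda>h1 h2. sum_pairs (D' h1) (\<lambda>a b. sum_pairs (rho a)
          (\<lambda>w1 z1. sum_pairs (rho b) (\<lambda>w2 z2.
        sum_pairs (phi w2) (\<lambda>u1 u2. phi_phi_id h2
            (\<lambda>x y z. \<gamma> (w1 * u1 * x) (z1 * u2 * y) (z2 * z)))))))"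
    by simp
  also have "\<dots> = sum_pairs (D' h) (\<lambda>a c. sum_pairs (D' c) (\<lambda>b h2. sum_pairs (rho a)
      (\<lambda>w1 z1. sum_pairs (rho b) (\<lambda>w2 z2.
        sum_pairs (phi w2) (\<lambda>u1 u2. phi_phi_id h2
            (\<lambda>x y z. \<gamma> (w1 * u1 * x) (z1 * u2 * y) (z2 * z)))))))"
    by (rule H'.coassoc) (intro R)
  also have "\<dots> = sum_pairs (D' h) (\<lambda>a c. sum_pairs (rho a) (\<lambda>w1 z1. sum_pairs (D' c)
      (\<lambda>b h2. sum_pairs (rho b) (\<lambda>w2 z2.
        sum_pairs (phi w2) (\<lambda>u1 u2. phi_phi_id h2
            (\<lambda>x y z. \<gamma> (w1 * (u1 * x)) (z1 * (u2 * y)) (z2 * z)))))))"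
    by (simp only: sum_pairs_swap[where t = "D' _" and s = "rho _"] mult.assoc)
  also have "\<dots> = sum_pairs (D' h) (\<lambda>a c. sum_pairs (rho a)
      (\<lambda>w1 z1. sum_pairs (D' c) (\<lambda>s t.
        sum_pairs (phi s) (\<lambda>x y. \<gamma> (w1 * x) (z1 * y) t))))"
  proof -
    have "\<And>w1 z1 c. sum_pairs (D' c) (\<lambda>b h2. sum_pairs (rho b)
        (\<lambda>w2 z2. sum_pairs (phi w2) (\<lambda>u1 u2.
        phi_phi_id h2 (\<lambda>x y z. \<gamma> (w1 * (u1 * x)) (z1 * (u2 * y)) (z2 * z))))) =
      sum_pairs (D' c) (\<lambda>s t. sum_pairs (phi s) (\<lambda>x y. \<gamma> (w1 * x) (z1 * y) t))"
      by (rule D'_phi_id_via_phi_phi_id) (intro R)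
    then show ?thesis by simp
  qed
  also have "\<dots> = sum_pairs (D' h) (\<lambda>d t. sum_pairs (D' d)
      (\<lambda>a s. sum_pairs (rho a) (\<lambda>w1 z1.
        sum_pairs (phi s) (\<lambda>x y. \<gamma> (w1 * x) (z1 * y) t))))"
    by (simp only: sum_pairs_swap[where t = "rho _" and s = "D' _"]) (rule H'.coassoc[symmetric], intro R)
  also have "\<dots> = sum_pairs (D' h) (\<lambda>d t. sum_pairs (D' d) (\<lambda>p q. \<gamma> p q t))"
  proof -
    have "\<And>d t. sum_pairs (D' d) (\<lambda>p q. \<gamma> p q t) =
        sum_pairs (D' d) (\<lambda>a s. sum_pairs (rho a) (\<lambda>w1 z1. sum_pairs (phi s)
            (\<lambda>x y. \<gamma> (w1 * x) (z1 * y) t)))"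
      by (rule D'_eq_rho_phi) (intro R)
    then show ?thesis by simp
  qed
  finally show ?thesis .
qed

lemma phi_coassoc:
  "trilinear \<gamma> \<Longrightarrow> phi_phi_id a \<gamma> = phi_id_D' a \<gamma>"
proof (rule cancel_rho_id_D'_left_factor[where X = phi_phi_id and Y = phi_id_D'])
  assume \<gamma>: "trilinear \<gamma>"
  note R = linear_intros trilinear_compose[OF \<gamma>]
  show "quadrilinear (\<lambda>x1 y1 z1 h. phi_phi_id h (\<lambda>x y z. \<gamma> (x1 * x) (y1 * y) (z1 * z)))"
    by (intro quadrilinearI R)
  show "quadrilinear (\<lambda>x1 y1 z1 h. phi_id_D' h (\<lambda>x y z. \<gamma> (x1 * x) (y1 * y) (z1 * z)))"
    by (intro quadrilinearI R)
next
  fix h and \<gamma> :: "'a \<Rightarrow> 'a \<Rightarrow> 'a \<Rightarrow> 'k" assume \<gamma>: "trilinear \<gamma>"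
  show "sum_pairs (D' h) (\<lambda>h1 h2. rho_id_D' h1 (\<lambda>x1 y1 z1. phi_phi_id h2
      (\<lambda>x y z. \<gamma> (x1 * x) (y1 * y) (z1 * z)))) =
        sum_pairs (D' h) (\<lambda>h1 h2. rho_id_D' h1 (\<lambda>x1 y1 z1. phi_id_D' h2
            (\<lambda>x y z. \<gamma> (x1 * x) (y1 * y) (z1 * z))))"
    using coassoc_left_via_phi[OF \<gamma>, of h] coassoc_right_via_phi[OF \<gamma>, of h] H'.coassoc[OF \<gamma>, of h] by simp
qed

lemma right_comodule_algebra_phi: "right_comodule_algebra sc D' e' phi"
  unfolding right_comodule_algebra_def
proof (intro conjI allI)
  fix a
  show "sum_list (map (\<lambda>(v, w). sc (e' w) v) (phi a)) = a"
  proof (rule eq_if_linear_forms_eq)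
    fix f assume "linear_form f"
    then show "f (sum_list (map (\<lambda>(v, w). sc (e' w) v) (phi a))) = f a"
      using linear_form_weighted_sum[of f "\<lambda>v w. e w" "\<lambda>v w. v"] by (simp add: counits_eq phi_counit mult.commute[of "e _"])
  qed
qed (use phi_linear phi_coassoc phi_mult phi_one in \<open>simp_all add: teq2_iff teq3_iff tmul_def\<close>)

end

theorem lemma2p8:
  fixes sc :: "'k::field \<Rightarrow> 'a::comm_ring_1 \<Rightarrow> 'a"
    and D D' :: "'a \<Rightarrow> ('a \<times> 'a) list"
    and e e' :: "'a \<Rightarrow> 'k"
    and S T :: "'a \<Rightarrow> 'a"
  assumes "hopf_brace sc D e S D' e' T"
  shows "left_comodule_algebra sc D' e' (brace_rho D S D')
       \<and> right_comodule_algebra sc D' e' (brace_phi D S D' T)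
       \<and> (\<forall>a. teq2 sc (map (\<lambda>(x, y). (x, S y)) (brace_rho D S D' a)) (brace_rho D S D' (S a)))"
proof -
  interpret comm_hopf_brace sc D e S D' e' T
    using assms by unfold_locales (simp_all add: hopf_brace_def hopf_algebra_def)
  show ?thesis
    using left_comodule_algebra_rho right_comodule_algebra_phi rho_antipode_teq by blast
qed

end
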